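(* Let $\phi:\mathbb{C}_0\to\mathbb{C}_0$ be a non-constant analytic function of the form $\phi(s)=c_0 s+\varphi(s)$ with $c_0\in\mathbb{N}_0$ and $\varphi\in\mathcal{D}$, and suppose that $C_\phi f=f\circ\phi$ belongs to $\mathcal{A}^+$ for every $f\in\mathcal{A}^+$, so that $C_\phi:\mathcal{A}^+\to\mathcal{A}^+$ is a composition operator. Then $C_\phi$ is an automorphism of $\mathcal{A}^+$ (i.e. a bijective algebra homomorphism of $\mathcal{A}^+$ onto itself) if and only if $\phi$ is a vertical translation: $\phi(s)=s+i\tau$ for some real number $\tau$.
   Context: For $\theta\in\mathbb{R}$, $\mathbb{C}_\theta=\{s\in\mathbb{C}:\operatorname{Re}s>\theta\}$. The Wiener–Dirichlet algebra $\mathcal{A}^+$ is the set of functions $f(s)=\sum_{n\ge1}a_n n^{-s}$ with $\|f\|_{\mathcal{A}^+}=\sum_{n\ge1}|a_n|<\infty$, viewed as functions on $\{\operatorname{Re}s\ge0\}$ (where the series converge absolutely); it is a commutative unital Banach algebra under pointwise multiplication (Dirichlet convolution of coefficients: $c_n=\sum_{ij=n}a_ib_j$). $\mathcal{D}$ denotes the space of analytic functions $\mathbb{C}_0\to\mathbb{C}$ which are representable by a convergent Dirichlet series $\sum_{n\ge1}c_n n^{-s}$ for $\operatorname{Re}s$ large enough. $\mathbb{N}_0=\{0,1,2,\dots\}$. *)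

theory Defs
  imports "HOL-Analysis.Analysis"
begin

definition halfplane :: "real \<Rightarrow> complex set" where
  "halfplane \<theta> = {s. Re s > \<theta>}"

text \<open>Value of the Dirichlet series with coefficients a (a n is the coefficient of n^(-s);
  the index 0 plays no role since 0 powr z = 0).\<close>
definition dirichlet_val :: "(nat \<Rightarrow> complex) \<Rightarrow> complex \<Rightarrow> complex" where
  "dirichlet_val a s = (\<Sum>n. a n * of_nat n powr (- s))"

text \<open>The Wiener-Dirichlet algebra A+, represented by coefficient sequences
  (indexed by n >= 1, a 0 = 0) with absolutely summable coefficients.\<close>
definition Aplus :: "(nat \<Rightarrow> complex) set" where
  "Aplus = {a. a 0 = 0 \<and> summable (\<lambda>n. norm (a n))}"

definition dconv :: "(nat \<Rightarrow> complex) \<Rightarrow> (nat \<Rightarrow> complex) \<Rightarrow> nat \<Rightarrow> complex" where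
  "dconv a b n = (\<Sum>d\<in>{d. d dvd n}. a d * b (n div d))"

definition dunit :: "nat \<Rightarrow> complex" where
  "dunit n = (if n = 1 then 1 else 0)"

definition Dclass :: "(complex \<Rightarrow> complex) set" where
  "Dclass = {g. g holomorphic_on halfplane 0 \<and>
     (\<exists>c :: nat \<Rightarrow> complex. \<exists>\<sigma> :: real. \<forall>s. Re s > \<sigma> \<longrightarrow>
        (\<lambda>n. c n * of_nat n powr (- s)) sums g s)}"

text \<open>The composition operator on A+ (coefficient level): C_phi a is the element b of A+
  whose Dirichlet series equals f_a o phi on C_0 (unique by uniqueness of coefficients).\<close>
definition comp_op :: "(complex \<Rightarrow> complex) \<Rightarrow> (nat \<Rightarrow> complex) \<Rightarrow> (nat \<Rightarrow> complex)" where
  "comp_op \<phi> a = (THE b. b \<in> Aplus \<and>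
      (\<forall>s\<in>halfplane 0. dirichlet_val b s = dirichlet_val a (\<phi> s)))"

definition Aplus_automorphism :: "((nat \<Rightarrow> complex) \<Rightarrow> (nat \<Rightarrow> complex)) \<Rightarrow> bool" where
  "Aplus_automorphism T \<longleftrightarrow>
     bij_betw T Aplus Aplus \<and>
     (\<forall>a\<in>Aplus. \<forall>b\<in>Aplus. T (\<lambda>n. a n + b n) = (\<lambda>n. T a n + T b n)) \<and>
     (\<forall>c::complex. \<forall>a\<in>Aplus. T (\<lambda>n. c * a n) = (\<lambda>n. c * T a n)) \<and>
     (\<forall>a\<in>Aplus. \<forall>b\<in>Aplus. T (dconv a b) = dconv (T a) (T b)) \<and>
     T dunit = dunit"

end

theory Submission
  imports Defs "HOL-Complex_Analysis.Complex_Analysis"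
begin

text \<open>If \<open>\<phi>(s) = s + i\<tau>\<close>, then \<open>C\<^sub>\<phi>\<close> multiplies the \<open>n\<close>-th coefficient by \<open>n\<^sup>-\<^sup>i\<^sup>\<tau>\<close>, which is clearly an
  automorphism. Conversely, let \<open>C\<^sub>\<phi>\<close> be an automorphism and \<open>\<phi>(s) = c\<^sub>0 s + \<psi>(s)\<close>. The coefficients of an
  element of \<open>\<A>\<^sup>+\<close> are recovered from its Dirichlet series \<open>f\<close> by letting \<open>s \<rightarrow> +\<infinity>\<close> along the real
  axis. Since \<open>\<mu> - k\<^sup>-\<^sup>s\<close> is invertible for \<open>|\<mu>| > 1\<close> and \<open>C\<^sub>\<phi>\<close> preserves invertibility, the preimage \<open>u\<close>
  of \<open>k\<^sup>-\<^sup>s\<close> satisfies \<open>|f\<^sub>u| \<le> 1\<close> on \<open>\<complex>\<^sub>0\<close>, and a mean-value inequality turns this into \<open>\<Sum> |u\<^sub>n|\<^sup>2 \<le> 1\<close>.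
  Now \<open>f\<^sub>u(\<phi>(s)) = k\<^sup>-\<^sup>s\<close>. If \<open>c\<^sub>0 \<ge> 2\<close>, the coefficient \<open>u\<^sub>2 = lim 2\<^sup>\<phi>\<^sup>(\<^sup>x\<^sup>) 2\<^sup>-\<^sup>x\<close> would be infinite. If \<open>c\<^sub>0 = 0\<close>,
  then \<open>\<phi>(x) \<rightarrow> c\<^sub>1\<close> geometrically fast, which forces \<open>f\<^sub>u\<close> to vanish to second order at \<open>c\<^sub>1\<close>,
  incompatible with the decay of \<open>(m+1)\<^sup>-\<^sup>x\<close>. If \<open>c\<^sub>0 = 1\<close>, then \<open>b = C\<^sub>\<phi>(2\<^sup>-\<^sup>s)\<close> and the preimage \<open>u\<close> of
  \<open>2\<^sup>-\<^sup>s\<close> satisfy \<open>b\<^sub>2 u\<^sub>2 = 1\<close>, both with square sums at most \<open>1\<close>; hence \<open>2\<^sup>-\<^sup>\<phi>\<^sup>(\<^sup>s\<^sup>) = c 2\<^sup>-\<^sup>s\<close> with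
  \<open>|c| = 1\<close>, and \<open>\<phi>\<close> is a vertical translation.\<close>

section \<open>Powers \<open>n\<^sup>-\<^sup>s\<close>\<close>

lemma norm_of_nat_powr: "norm (of_nat n powr z :: complex) = real n powr Re z"
  using norm_powr_real_powr[of "of_nat n :: complex" z] by simp

lemma norm_of_nat_powr_neg_le_1:
  assumes "Re s \<ge> 0"
  shows "norm (of_nat n powr (- s) :: complex) \<le> 1"
proof (cases "n = 0")
  case False
  have "real n powr (- Re s) \<le> real n powr 0"
    using False assms by (intro powr_mono) auto
  thus ?thesis using False by (simp add: norm_of_nat_powr)
qed simp

lemma of_nat_powr_cancel:
  assumes "n \<ge> 1"
  shows "(of_nat n :: complex) powr w * of_nat n powr (- w) = 1"
  using assms by (simp add: powr_add[symmetric])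

lemma of_nat_powr_mult_div:
  assumes "(d::nat) dvd n"
  shows "(of_nat d :: complex) powr z * of_nat (n div d) powr z = of_nat n powr z"
proof -
  have "(of_nat n :: complex) = of_nat d * of_nat (n div d)"
    using assms by (metis dvd_mult_div_cancel of_nat_mult)
  thus ?thesis by (simp add: powr_times_real)
qed

lemma of_nat_power_powr: "(of_nat (k ^ j) :: complex) powr z = (of_nat k powr z) ^ j"
proof (induction j)
  case (Suc j)
  have "(of_nat (k ^ Suc j) :: complex) powr z = of_nat k powr z * of_nat (k ^ j) powr z"
    by (simp add: powr_times_real)
  thus ?case using Suc by simp
qed simp

lemma powr_tendsto_0_if_base_less_1:
  fixes q :: real
  assumes "0 < q" "q < 1" and "filterlim f at_top F"
  shows "((\<lambda>x. q powr f x) \<longlongrightarrow> 0) F"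
proof -
  have "filterlim (\<lambda>x. ln q * f x) at_bot F"
    using assms by (intro filterlim_tendsto_neg_mult_at_bot[OF tendsto_const]) auto
  hence "((\<lambda>x. exp (ln q * f x)) \<longlongrightarrow> 0) F"
    by (rule filterlim_compose[OF exp_at_bot])
  thus ?thesis using assms by (simp add: powr_def mult.commute)
qed

lemma filterlim_powr_at_top_if_base_greater_1:
  fixes q :: real
  assumes "1 < q" and "filterlim f at_top F"
  shows "filterlim (\<lambda>x. q powr f x) at_top F"
proof -
  have "filterlim (\<lambda>x. ln q * f x) at_top F"
    using assms by (intro filterlim_tendsto_pos_mult_at_top[OF tendsto_const]) auto
  hence "filterlim (\<lambda>x. exp (ln q * f x)) at_top F"
    by (rule filterlim_compose[OF exp_at_top])
  thus ?thesis using assms by (simp add: powr_def mult.commute)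
qed

lemma norm_of_nat_powr_ratio:
  assumes "m \<ge> 1" "k \<ge> 1"
  shows "norm ((of_nat m :: complex) powr of_real x * of_nat k powr (- of_real x))
           = (real m / real k) powr x"
  using assms by (simp only: norm_mult norm_of_nat_powr) (simp add: powr_divide powr_minus_divide)

lemma of_nat_powr_ratio_tendsto_0:
  assumes "1 \<le> m" "m < k"
  shows "((\<lambda>x::real. (of_nat m :: complex) powr of_real x * of_nat k powr (- of_real x)) \<longlongrightarrow> 0) at_top"
proof (rule tendsto_norm_zero_cancel)
  have "((\<lambda>x::real. (real m / real k) powr x) \<longlongrightarrow> 0) at_top"
    using assms by (intro powr_tendsto_0_if_base_less_1 filterlim_ident) auto
  thus "((\<lambda>x. norm ((of_nat m :: complex) powr of_real x * of_nat k powr (- of_real x))) \<longlongrightarrow> 0) at_top"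
    using assms by (simp add: norm_of_nat_powr_ratio)
qed

lemma of_nat_powr_neg_tendsto_0:
  assumes "k \<ge> 2" and "filterlim (\<lambda>x. Re (V x)) at_top F"
  shows "((\<lambda>x. (of_nat k :: complex) powr (- V x)) \<longlongrightarrow> 0) F"
proof (rule tendsto_norm_zero_cancel)
  have "norm ((of_nat k :: complex) powr (- V x)) = (1 / real k) powr Re (V x)" for x
    using assms(1) by (simp only: norm_of_nat_powr) (simp add: powr_minus_divide powr_divide)
  moreover have "((\<lambda>x. (1 / real k) powr Re (V x)) \<longlongrightarrow> 0) F"
    using assms by (intro powr_tendsto_0_if_base_less_1) auto
  ultimately show "((\<lambda>x. norm ((of_nat k :: complex) powr (- V x))) \<longlongrightarrow> 0) F" by simp
qed

lemma filterlim_norm_of_nat_powr_ratio: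
  assumes "1 \<le> k" "k < m"
  shows "filterlim (\<lambda>x::real. norm ((of_nat m :: complex) powr of_real x * of_nat k powr (- of_real x)))
           at_top at_top"
  using assms by (simp add: norm_of_nat_powr_ratio)
    (intro filterlim_powr_at_top_if_base_greater_1 filterlim_ident, simp)

section \<open>The algebra \<open>\<A>\<^sup>+\<close> and its Dirichlet series\<close>

lemma summable_norm_dirichlet_terms:
  assumes "a \<in> Aplus" "Re s \<ge> 0"
  shows "summable (\<lambda>n. norm (a n * of_nat n powr (- s)))"
proof (rule summable_comparison_test)
  show "summable (\<lambda>n. norm (a n))" using assms by (simp add: Aplus_def)
  show "\<exists>N. \<forall>n\<ge>N. norm (norm (a n * of_nat n powr (- s))) \<le> norm (a n)"
    using norm_of_nat_powr_neg_le_1[OF assms(2)] by (auto simp: norm_mult intro!: mult_left_le)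
qed

lemma sums_dirichlet_val:
  assumes "a \<in> Aplus" "Re s \<ge> 0"
  shows "(\<lambda>n. a n * of_nat n powr (- s)) sums dirichlet_val a s"
  unfolding dirichlet_val_def using summable_norm_dirichlet_terms[OF assms]
  by (simp add: summable_norm_cancel summable_sums)

lemma Aplus_add: "a \<in> Aplus \<Longrightarrow> b \<in> Aplus \<Longrightarrow> (\<lambda>n. a n + b n) \<in> Aplus"
  unfolding Aplus_def
  by (auto intro!: summable_comparison_test[where g="\<lambda>n. norm (a n) + norm (b n)"]
      summable_add norm_triangle_ineq)

lemma Aplus_diff: "a \<in> Aplus \<Longrightarrow> b \<in> Aplus \<Longrightarrow> (\<lambda>n. a n - b n) \<in> Aplus"
  unfolding Aplus_def
  by (auto intro!: summable_comparison_test[where g="\<lambda>n. norm (a n) + norm (b n)"]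
      summable_add norm_triangle_ineq4)

lemma Aplus_scale: "a \<in> Aplus \<Longrightarrow> (\<lambda>n. c * a n) \<in> Aplus"
  unfolding Aplus_def by (auto simp: norm_mult intro!: summable_mult)

lemma dirichlet_val_add:
  assumes "a \<in> Aplus" "b \<in> Aplus" "Re s \<ge> 0"
  shows "dirichlet_val (\<lambda>n. a n + b n) s = dirichlet_val a s + dirichlet_val b s"
  using sums_add[OF sums_dirichlet_val[OF assms(1,3)] sums_dirichlet_val[OF assms(2,3)]]
  by (simp add: dirichlet_val_def sums_iff algebra_simps)

lemma dirichlet_val_diff:
  assumes "a \<in> Aplus" "b \<in> Aplus" "Re s \<ge> 0"
  shows "dirichlet_val (\<lambda>n. a n - b n) s = dirichlet_val a s - dirichlet_val b s"
  using sums_diff[OF sums_dirichlet_val[OF assms(1,3)] sums_dirichlet_val[OF assms(2,3)]]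
  by (simp add: dirichlet_val_def sums_iff algebra_simps)

lemma dirichlet_val_scale:
  assumes "a \<in> Aplus" "Re s \<ge> 0"
  shows "dirichlet_val (\<lambda>n. c * a n) s = c * dirichlet_val a s"
  using sums_mult[OF sums_dirichlet_val[OF assms], of c]
  unfolding dirichlet_val_def by (simp add: mult.assoc sums_iff)

lemma open_halfplane: "open (halfplane \<theta>)"
  unfolding halfplane_def by (simp add: open_halfspace_Re_gt)

lemma convex_halfplane: "convex (halfplane \<theta>)"
  unfolding halfplane_def by (simp add: convex_halfspace_Re_gt)

lemma holomorphic_dirichlet_val:
  assumes a: "a \<in> Aplus"
  shows "dirichlet_val a holomorphic_on halfplane 0"
proof -
  let ?A = "{w::complex. Re w \<ge> 0}"
  have ul: "uniform_limit ?A (\<lambda>N w. \<Sum>i<N. a i * of_nat i powr (- w)) (dirichlet_val a) sequentially"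
    unfolding dirichlet_val_def[abs_def]
  proof (rule Weierstrass_m_test)
    show "norm (a n * of_nat n powr (- w)) \<le> norm (a n)" if "w \<in> ?A" for n w
      using norm_of_nat_powr_neg_le_1[of w n] that by (auto simp: norm_mult intro!: mult_left_le)
  qed (use a in \<open>simp add: Aplus_def\<close>)
  have "dirichlet_val a field_differentiable at z" if z: "z \<in> halfplane 0" for z
  proof -
    define r where "r = Re z / 2"
    have r: "r > 0" using z by (simp add: r_def halfplane_def)
    have "cball z r \<subseteq> ?A"
    proof
      fix w assume "w \<in> cball z r"
      hence "Re z - Re w \<le> r" using complex_Re_le_cmod[of "z - w"] by (simp add: dist_norm)
      thus "w \<in> ?A" using r by (simp add: r_def)
    qed
    hence ul_z: "uniform_limit (cball z r) (\<lambda>N w. \<Sum>i<N. a i * of_nat i powr (- w)) (dirichlet_val a) sequentially"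
      by (rule uniform_limit_on_subset[OF ul])
    have hol: "eventually (\<lambda>N. continuous_on (cball z r) (\<lambda>w. \<Sum>i<N. a i * of_nat i powr (- w)) \<and>
          (\<lambda>w. \<Sum>i<N. a i * of_nat i powr (- w)) holomorphic_on ball z r) sequentially"
      by (intro always_eventually allI conjI holomorphic_on_imp_continuous_on holomorphic_intros)
    obtain "dirichlet_val a holomorphic_on ball z r"
      using holomorphic_uniform_limit[OF hol ul_z] by auto
    thus ?thesis using r by (meson centre_in_ball holomorphic_on_imp_differentiable_at open_ball)
  qed
  thus ?thesis by (simp add: holomorphic_on_open open_halfplane field_differentiable_def)
qed

section \<open>Coefficients as limits along the real direction\<close>

definition dirichlet_abs_summable :: "(nat \<Rightarrow> complex) \<Rightarrow> real \<Rightarrow> bool" where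
  "dirichlet_abs_summable c \<sigma> \<longleftrightarrow> summable (\<lambda>n. norm (c n) * real n powr (- \<sigma>))"

lemma Aplus_weight_0: "a \<in> Aplus \<Longrightarrow> (\<lambda>n. norm (a n) * real n powr (- 0)) = (\<lambda>n. norm (a n))"
  by (auto simp: Aplus_def fun_eq_iff)

lemma Aplus_dirichlet_abs_summable: "a \<in> Aplus \<Longrightarrow> dirichlet_abs_summable a 0"
  using Aplus_weight_0[of a] by (simp add: Aplus_def dirichlet_abs_summable_def)

lemma dirichlet_tail_bound:
  assumes summ: "dirichlet_abs_summable c \<sigma>" and w: "Re w \<ge> \<sigma>"
  shows "norm (dirichlet_val c w - (\<Sum>n\<le>m. c n * of_nat n powr (- w)))
           \<le> (\<Sum>n. norm (c n) * real n powr (- \<sigma>)) * real (Suc m) powr (\<sigma> - Re w)"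
proof -
  define f where "f n = c n * of_nat n powr (- w)" for n
  define g where "g n = norm (c n) * real n powr (- \<sigma>)" for n
  have sg: "summable g" using summ by (simp add: g_def[abs_def] dirichlet_abs_summable_def)
  have fg: "norm (f n) \<le> g n * real n powr (\<sigma> - Re w)" for n
  proof (cases "n = 0")
    case False
    have "real n powr (- Re w) = real n powr (- \<sigma>) * real n powr (\<sigma> - Re w)"
      by (simp add: powr_add[symmetric])
    thus ?thesis by (simp add: f_def g_def norm_mult norm_of_nat_powr)
  qed (simp add: f_def g_def)
  have "norm (f n) \<le> g n" for n
  proof -
    have "real n powr (\<sigma> - Re w) \<le> 1"
    proof (cases "n = 0")
      case False
      have "real n powr (\<sigma> - Re w) \<le> real n powr 0" using False w by (intro powr_mono) auto
      thus ?thesis using False by simp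
    qed simp
    moreover have "g n \<ge> 0" by (simp add: g_def)
    ultimately show ?thesis using fg[of n] by (meson mult_left_le order_trans)
  qed
  hence sf: "summable (\<lambda>n. norm (f n))"
    by (intro summable_comparison_test[OF _ sg]) auto
  have "dirichlet_val c w - (\<Sum>n\<le>m. f n) = (\<Sum>n. f (n + Suc m))"
    using suminf_split_initial_segment[OF summable_norm_cancel[OF sf], of "Suc m"]
    by (simp add: dirichlet_val_def f_def lessThan_Suc_atMost)
  also have "norm \<dots> \<le> (\<Sum>n. norm (f (n + Suc m)))"
    by (rule summable_norm) (use sf summable_ignore_initial_segment in blast)
  also have "\<dots> \<le> (\<Sum>n. g (n + Suc m) * real (Suc m) powr (\<sigma> - Re w))"
  proof (rule suminf_le)
    fix n
    have "real (n + Suc m) powr (\<sigma> - Re w) \<le> real (Suc m) powr (\<sigma> - Re w)"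
      using w by (intro powr_mono2') auto
    then show "norm (f (n + Suc m)) \<le> g (n + Suc m) * real (Suc m) powr (\<sigma> - Re w)"
      by (rule order_trans[OF fg[of "n + Suc m"] mult_left_mono]) (simp_all add: g_def)
  next
    show "summable (\<lambda>n. norm (f (n + Suc m)))" using sf summable_ignore_initial_segment by blast
    show "summable (\<lambda>n. g (n + Suc m) * real (Suc m) powr (\<sigma> - Re w))"
      by (intro summable_mult2 summable_ignore_initial_segment sg)
  qed
  also have "\<dots> = (\<Sum>n. g (n + Suc m)) * real (Suc m) powr (\<sigma> - Re w)"
    by (intro suminf_mult2[symmetric] summable_ignore_initial_segment sg)
  also have "\<dots> \<le> (\<Sum>n. g n) * real (Suc m) powr (\<sigma> - Re w)"
  proof (rule mult_right_mono)
    have "(\<Sum>n. g n) = (\<Sum>n<Suc m. g n) + (\<Sum>n. g (n + Suc m))"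
      using suminf_split_initial_segment[OF sg, of "Suc m"] by simp
    moreover have "(\<Sum>n<Suc m. g n) \<ge> 0" by (intro sum_nonneg) (simp add: g_def)
    ultimately show "(\<Sum>n. g (n + Suc m)) \<le> (\<Sum>n. g n)" by linarith
  qed simp
  finally show ?thesis by (simp add: f_def g_def)
qed

lemma norm_dirichlet_val_le:
  assumes "dirichlet_abs_summable c \<sigma>" "Re w \<ge> \<sigma>"
  shows "norm (dirichlet_val c w) \<le> (\<Sum>n. norm (c n) * real n powr (- \<sigma>))"
  using dirichlet_tail_bound[OF assms, of 0] by simp

lemma tendsto_dirichlet_leading_coeff:
  assumes summ: "dirichlet_abs_summable c \<sigma>" and n: "n \<ge> 1"
    and w: "filterlim (\<lambda>x. Re (w x)) at_top F"
  shows "((\<lambda>x. of_nat n powr (w x) *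
            (dirichlet_val c (w x) - (\<Sum>k<n. c k * of_nat k powr (- w x)))) \<longlongrightarrow> c n) F"
proof -
  define S where "S = (\<Sum>n. norm (c n) * real n powr (- \<sigma>))"
  have bnd: "norm (of_nat n powr (w x) *
            (dirichlet_val c (w x) - (\<Sum>k<n. c k * of_nat k powr (- w x))) - c n)
        \<le> S * real (Suc n) powr \<sigma> * (real n / real (Suc n)) powr Re (w x)"
    if "Re (w x) \<ge> \<sigma>" for x
  proof -
    let ?f = "\<lambda>k. c k * of_nat k powr (- w x)"
    have "of_nat n powr (w x) * ?f n = c n"
      using of_nat_powr_cancel[OF n, of "w x"] by (simp add: mult.assoc mult.left_commute)
    hence eq: "of_nat n powr (w x) * (dirichlet_val c (w x) - (\<Sum>k<n. ?f k)) - c n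
        = of_nat n powr (w x) * (dirichlet_val c (w x) - (\<Sum>k\<le>n. ?f k))"
      by (simp add: lessThan_Suc_atMost[symmetric] algebra_simps)
    have "norm (of_nat n powr (w x) * (dirichlet_val c (w x) - (\<Sum>k\<le>n. ?f k)))
        \<le> real n powr Re (w x) * (S * real (Suc n) powr (\<sigma> - Re (w x)))"
      unfolding norm_mult norm_of_nat_powr S_def
      by (intro mult_left_mono dirichlet_tail_bound[OF summ that]) simp
    also have "\<dots> = S * real (Suc n) powr \<sigma> * (real n / real (Suc n)) powr Re (w x)"
      using n by (simp add: powr_divide powr_diff field_simps)
    finally show ?thesis using eq by simp
  qed
  have lim0: "((\<lambda>x. S * real (Suc n) powr \<sigma> * (real n / real (Suc n)) powr Re (w x)) \<longlongrightarrow> 0) F"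
    using n by (intro tendsto_mult_right_zero powr_tendsto_0_if_base_less_1[OF _ _ w]) auto
  have "eventually (\<lambda>x. Re (w x) \<ge> \<sigma>) F"
    using w by (simp add: filterlim_at_top)
  thus ?thesis
    by (rule LIM_zero_cancel[OF Lim_null_comparison[OF eventually_mono[OF _ bnd] lim0]])
qed

lemma tendsto_dirichlet_val_first_coeff:
  assumes "dirichlet_abs_summable c \<sigma>" "filterlim (\<lambda>x. Re (w x)) at_top F"
  shows "((\<lambda>x. dirichlet_val c (w x)) \<longlongrightarrow> c 1) F"
  using tendsto_dirichlet_leading_coeff[OF assms(1) _ assms(2), of 1] by simp

lemma tendsto_dirichlet_val_next_coeff:
  assumes summ: "dirichlet_abs_summable c \<sigma>" and m: "m \<ge> 2"
    and gap: "\<And>k. 2 \<le> k \<Longrightarrow> k < m \<Longrightarrow> c k = 0"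
    and w: "filterlim (\<lambda>x. Re (w x)) at_top F"
  shows "((\<lambda>x. of_nat m powr (w x) * (dirichlet_val c (w x) - c 1)) \<longlongrightarrow> c m) F"
proof -
  have "(\<Sum>k<m. c k * of_nat k powr (- z)) = (\<Sum>k\<in>{1}. c k * of_nat k powr (- z))" for z
  proof (rule sum.mono_neutral_right)
    show "\<forall>i\<in>{..<m} - {1}. c i * of_nat i powr (- z) = 0"
    proof
      fix i assume "i \<in> {..<m} - {1}"
      hence "i = 0 \<or> (2 \<le> i \<and> i < m)" by auto
      thus "c i * of_nat i powr (- z) = 0" using gap by auto
    qed
  qed (use m in auto)
  thus ?thesis using tendsto_dirichlet_leading_coeff[OF summ _ w, of m] m by simp
qed

lemma Aplus_eqI:
  assumes a: "a \<in> Aplus" and b: "b \<in> Aplus"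
    and eq: "\<forall>s\<in>halfplane 0. dirichlet_val a s = dirichlet_val b s"
  shows "a = b"
proof -
  define d where "d n = a n - b n" for n
  have d: "d \<in> Aplus" using Aplus_diff[OF a b] by (simp add: d_def[abs_def])
  have d0: "dirichlet_val d s = 0" if "Re s > 0" for s
    using dirichlet_val_diff[OF a b, of s] eq that by (simp add: d_def[abs_def] halfplane_def)
  have "d n = 0" for n
  proof (induction n rule: less_induct)
    case (less n)
    show ?case
    proof (cases "n = 0")
      case True then show ?thesis using d by (simp add: Aplus_def)
    next
      case False
      have real_top: "filterlim (\<lambda>x::real. Re (of_real x :: complex)) at_top at_top"
        by (simp add: filterlim_ident)
      have "((\<lambda>x::real. of_nat n powr (of_real x) *
              (dirichlet_val d (of_real x) - (\<Sum>k<n. d k * of_nat k powr (- of_real x)))) \<longlongrightarrow> d n) at_top"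
        using tendsto_dirichlet_leading_coeff[OF Aplus_dirichlet_abs_summable[OF d] _ real_top] False
        by simp
      moreover have "eventually (\<lambda>x::real. of_nat n powr (of_real x) *
              (dirichlet_val d (of_real x) - (\<Sum>k<n. d k * of_nat k powr (- of_real x))) = 0) at_top"
        using eventually_gt_at_top[of 0] by eventually_elim (simp add: d0 less.IH)
      ultimately have "((\<lambda>x::real. 0::complex) \<longlongrightarrow> d n) at_top"
        by (rule Lim_transform_eventually)
      thus ?thesis by (simp add: tendsto_const_iff)
    qed
  qed
  thus ?thesis by (auto simp: d_def)
qed

lemma comp_op_eqI:
  assumes "a \<in> Aplus" "b \<in> Aplus" "\<forall>s\<in>halfplane 0. dirichlet_val b s = dirichlet_val a (\<phi> s)"
  shows "comp_op \<phi> a = b"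
proof -
  have "\<exists>!b. b \<in> Aplus \<and> (\<forall>s\<in>halfplane 0. dirichlet_val b s = dirichlet_val a (\<phi> s))"
  proof (rule ex1I[of _ b])
    fix b' assume "b' \<in> Aplus \<and> (\<forall>s\<in>halfplane 0. dirichlet_val b' s = dirichlet_val a (\<phi> s))"
    thus "b' = b" using assms Aplus_eqI[of b' b] by auto
  qed (use assms in auto)
  thus ?thesis unfolding comp_op_def using assms by (intro the1_equality) auto
qed

lemma comp_op_Aplus_dirichlet_val:
  assumes "\<forall>a\<in>Aplus. \<exists>b\<in>Aplus. \<forall>s\<in>halfplane 0. dirichlet_val b s = dirichlet_val a (\<phi> s)"
    and "a \<in> Aplus"
  shows "comp_op \<phi> a \<in> Aplus"
    and "\<And>s. s \<in> halfplane 0 \<Longrightarrow> dirichlet_val (comp_op \<phi> a) s = dirichlet_val a (\<phi> s)"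
proof -
  obtain b where "b \<in> Aplus" "\<forall>s\<in>halfplane 0. dirichlet_val b s = dirichlet_val a (\<phi> s)"
    using assms by blast
  with comp_op_eqI[OF assms(2) this] show "comp_op \<phi> a \<in> Aplus"
    and "\<And>s. s \<in> halfplane 0 \<Longrightarrow> dirichlet_val (comp_op \<phi> a) s = dirichlet_val a (\<phi> s)"
    by auto
qed

section \<open>Dirichlet convolution\<close>

lemma has_sum_divisor_regroup:
  fixes P :: "nat \<times> nat \<Rightarrow> 'a::{banach,uniform_topological_group_add}"
  assumes "(P has_sum X) ({1..} \<times> {1..})"
  shows "((\<lambda>n. \<Sum>d\<in>{d. d dvd n}. P (d, n div d)) has_sum X) {1..}"
proof -
  have bij: "bij_betw (\<lambda>(n, d). (d, n div d)) (SIGMA n:{1::nat..}. {d. d dvd n}) ({1..} \<times> {1..})"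
  proof (rule bij_betwI[where g="\<lambda>(i, j). (i * j, i)"])
    show "(\<lambda>(n, d). (d, n div d)) \<in> (SIGMA n:{1::nat..}. {d. d dvd n}) \<rightarrow> {1..} \<times> {1..}"
      by (auto elim!: dvdE)
  qed (auto elim!: dvdE)
  have "((\<lambda>(n, d). P (d, n div d)) has_sum X) (SIGMA n:{1::nat..}. {d. d dvd n})"
    using has_sum_reindex_bij_betw[OF bij, of P X] assms by (simp add: case_prod_unfold)
  thus ?thesis
  proof (rule has_sum_Sigma')
    fix n :: nat assume "n \<in> {1..}"
    hence "finite {d. d dvd n}" by (intro finite_divisors_nat) auto
    thus "((\<lambda>d. case (n, d) of (n, d) \<Rightarrow> P (d, n div d)) has_sum (\<Sum>d\<in>{d. d dvd n}. P (d, n div d))) {d. d dvd n}"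
      by (simp add: has_sum_finite)
  qed
qed

lemma has_sum_from_1_if_summable_norm:
  fixes \<alpha> :: "nat \<Rightarrow> complex"
  assumes "summable (\<lambda>n. norm (\<alpha> n))" "\<alpha> 0 = 0"
  shows "(\<alpha> has_sum suminf \<alpha>) {1..}"
proof -
  have "(\<alpha> has_sum suminf \<alpha>) UNIV"
    using assms summable_norm_cancel summable_sums by (blast intro: norm_summable_imp_has_sum)
  thus ?thesis
    by (subst has_sum_cong_neutral[where g=\<alpha> and T=UNIV]) (use assms(2) in \<open>auto simp: not_le\<close>)
qed

lemma sums_dirichlet_convolution:
  fixes \<alpha> \<beta> :: "nat \<Rightarrow> complex"
  assumes sa: "summable (\<lambda>n. norm (\<alpha> n))" and sb: "summable (\<lambda>n. norm (\<beta> n))"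
    and a0: "\<alpha> 0 = 0" and b0: "\<beta> 0 = 0"
  shows "(\<lambda>n. \<Sum>d\<in>{d. d dvd n}. \<alpha> d * \<beta> (n div d)) sums (suminf \<alpha> * suminf \<beta>)"
proof -
  have na: "(\<lambda>j. norm (\<alpha> j)) summable_on {1..}" and nb: "(\<lambda>j. norm (\<beta> j)) summable_on {1..}"
    using sa sb by (auto intro: summable_on_subset_banach[OF norm_summable_imp_summable_on])
  have summ: "(\<lambda>(i, j). \<alpha> i * \<beta> j) summable_on ({1..} \<times> {1..})"
  proof (rule abs_summable_summable)
    define C where "C = infsum (\<lambda>j. norm (\<beta> j)) {1..}"
    have "C \<ge> 0" unfolding C_def by (rule infsum_nonneg) auto
    moreover have "infsum (\<lambda>j. norm (\<alpha> i * \<beta> j)) {1..} = norm (\<alpha> i) * C" for i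
      using infsum_cmult_right[OF nb, of "norm (\<alpha> i)"] by (simp add: norm_mult C_def)
    ultimately show "(\<lambda>x. norm ((\<lambda>(i, j). \<alpha> i * \<beta> j) x)) summable_on ({1..} \<times> {1..})"
      using summable_on_cmult_right[OF nb] summable_on_cmult_left[OF na, of C]
      by (subst Infinite_Sum.abs_summable_on_Sigma_iff) (auto simp: norm_mult)
  qed
  have "((\<lambda>(i, j). \<alpha> i * \<beta> j) has_sum (suminf \<alpha> * suminf \<beta>)) ({1..} \<times> {1..})"
  proof (rule has_sum_SigmaI[where g="\<lambda>i. \<alpha> i * suminf \<beta>"])
    show "((\<lambda>j. case (i, j) of (i, j) \<Rightarrow> \<alpha> i * \<beta> j) has_sum \<alpha> i * suminf \<beta>) {1..}" for i
      using has_sum_cmult_right[OF has_sum_from_1_if_summable_norm[OF sb b0], of "\<alpha> i"] by simp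
    show "((\<lambda>i. \<alpha> i * suminf \<beta>) has_sum suminf \<alpha> * suminf \<beta>) {1..}"
      by (rule has_sum_cmult_left[OF has_sum_from_1_if_summable_norm[OF sa a0]])
  qed (use summ in auto)
  from has_sum_divisor_regroup[OF this]
  have "((\<lambda>n. \<Sum>d\<in>{d. d dvd n}. \<alpha> d * \<beta> (n div d)) has_sum (suminf \<alpha> * suminf \<beta>)) UNIV"
    by (subst (asm) has_sum_cong_neutral[where T=UNIV]) (auto simp: not_le)
  thus ?thesis by (rule has_sum_imp_sums)
qed

lemma dconv_Aplus:
  assumes a: "a \<in> Aplus" and b: "b \<in> Aplus"
  shows "dconv a b \<in> Aplus"
proof -
  let ?\<alpha> = "\<lambda>n. complex_of_real (norm (a n))" and ?\<beta> = "\<lambda>n. complex_of_real (norm (b n))"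
  have "(\<lambda>n. \<Sum>d\<in>{d. d dvd n}. ?\<alpha> d * ?\<beta> (n div d)) sums (suminf ?\<alpha> * suminf ?\<beta>)"
    by (rule sums_dirichlet_convolution) (use a b in \<open>auto simp: Aplus_def\<close>)
  hence "summable (\<lambda>n. complex_of_real (\<Sum>d\<in>{d. d dvd n}. norm (a d) * norm (b (n div d))))"
    by (simp add: sums_summable)
  hence "summable (\<lambda>n. \<Sum>d\<in>{d. d dvd n}. norm (a d) * norm (b (n div d)))"
    by (simp only: summable_complex_of_real)
  hence "summable (\<lambda>n. norm (dconv a b n))"
    unfolding dconv_def
    by (rule summable_comparison_test[rotated])
       (auto simp: norm_mult intro!: exI[of _ 0] order_trans[OF norm_sum])
  thus ?thesis by (simp add: Aplus_def dconv_def)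
qed

lemma dirichlet_val_dconv:
  assumes a: "a \<in> Aplus" and b: "b \<in> Aplus" and s: "Re s \<ge> 0"
  shows "dirichlet_val (dconv a b) s = dirichlet_val a s * dirichlet_val b s"
proof -
  let ?\<alpha> = "\<lambda>n. a n * of_nat n powr (- s)" and ?\<beta> = "\<lambda>n. b n * of_nat n powr (- s)"
  have "(\<lambda>n. \<Sum>d\<in>{d. d dvd n}. ?\<alpha> d * ?\<beta> (n div d)) sums (suminf ?\<alpha> * suminf ?\<beta>)"
    by (rule sums_dirichlet_convolution)
       (use summable_norm_dirichlet_terms[OF a s] summable_norm_dirichlet_terms[OF b s] in auto)
  moreover have "(\<Sum>d\<in>{d. d dvd n}. ?\<alpha> d * ?\<beta> (n div d)) = dconv a b n * of_nat n powr (- s)" for n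
  proof -
    have "(\<Sum>d\<in>{d. d dvd n}. ?\<alpha> d * ?\<beta> (n div d))
        = (\<Sum>d\<in>{d. d dvd n}. a d * b (n div d) * of_nat n powr (- s))"
    proof (rule sum.cong[OF refl])
      fix d assume "d \<in> {d. d dvd n}"
      thus "?\<alpha> d * ?\<beta> (n div d) = a d * b (n div d) * of_nat n powr (- s)"
        using of_nat_powr_mult_div[of d n "- s"] by (simp add: algebra_simps)
    qed
    thus ?thesis by (simp add: dconv_def sum_distrib_right)
  qed
  ultimately show ?thesis by (simp add: dirichlet_val_def sums_iff)
qed

section \<open>Vertical translations\<close>

definition vtranslate :: "real \<Rightarrow> (nat \<Rightarrow> complex) \<Rightarrow> nat \<Rightarrow> complex" where
  "vtranslate \<tau> a n = a n * of_nat n powr (- (\<i> * of_real \<tau>))"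

lemma vtranslate_Aplus:
  assumes "a \<in> Aplus"
  shows "vtranslate \<tau> a \<in> Aplus"
proof -
  have le: "norm (norm (vtranslate \<tau> a n)) \<le> norm (a n)" for n
    using norm_of_nat_powr_neg_le_1[of "\<i> * of_real \<tau>" n]
    by (auto simp: vtranslate_def norm_mult intro!: mult_left_le)
  have "summable (\<lambda>n. norm (a n))" using assms by (simp add: Aplus_def)
  hence "summable (\<lambda>n. norm (vtranslate \<tau> a n))"
    using summable_comparison_test'[of "\<lambda>n. norm (a n)" 0 "\<lambda>n. norm (vtranslate \<tau> a n)"] le
    by blast
  thus ?thesis using assms by (simp add: Aplus_def vtranslate_def)
qed

lemma dirichlet_val_vtranslate:
  "dirichlet_val (vtranslate \<tau> a) s = dirichlet_val a (s + \<i> * of_real \<tau>)"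
  unfolding dirichlet_val_def vtranslate_def
  by (simp add: mult.assoc powr_add[symmetric] algebra_simps)

lemma vtranslate_inverse:
  assumes "a \<in> Aplus"
  shows "vtranslate (- \<tau>) (vtranslate \<tau> a) = a"
proof
  fix n
  show "vtranslate (- \<tau>) (vtranslate \<tau> a) n = a n"
  proof (cases "n = 0")
    case True then show ?thesis using assms by (simp add: Aplus_def vtranslate_def)
  next
    case False
    hence "(of_nat n :: complex) powr (- (\<i> * of_real \<tau>)) * of_nat n powr (- (\<i> * of_real (- \<tau>))) = 1"
      by (simp add: powr_add[symmetric])
    thus ?thesis by (simp add: vtranslate_def mult.assoc)
  qed
qed

lemma vtranslate_dconv: "vtranslate \<tau> (dconv a b) = dconv (vtranslate \<tau> a) (vtranslate \<tau> b)"
proof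
  fix n
  have "vtranslate \<tau> (dconv a b) n
      = (\<Sum>d\<in>{d. d dvd n}. a d * b (n div d) * of_nat n powr (- (\<i> * of_real \<tau>)))"
    by (simp add: vtranslate_def dconv_def sum_distrib_right)
  also have "\<dots> = dconv (vtranslate \<tau> a) (vtranslate \<tau> b) n"
    unfolding dconv_def vtranslate_def
  proof (rule sum.cong[OF refl])
    fix d assume "d \<in> {d. d dvd n}"
    thus "a d * b (n div d) * of_nat n powr (- (\<i> * of_real \<tau>))
      = a d * of_nat d powr (- (\<i> * of_real \<tau>)) * (b (n div d) * of_nat (n div d) powr (- (\<i> * of_real \<tau>)))"
      using of_nat_powr_mult_div[of d n "- (\<i> * of_real \<tau>)"] by (simp add: algebra_simps)
  qed
  finally show "vtranslate \<tau> (dconv a b) n = dconv (vtranslate \<tau> a) (vtranslate \<tau> b) n" .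
qed

lemma vtranslate_dunit: "vtranslate \<tau> dunit = dunit"
  by (auto simp: vtranslate_def dunit_def fun_eq_iff)

lemma dunit_Aplus: "dunit \<in> Aplus"
proof -
  have "summable (\<lambda>n. norm (dunit n))"
    by (rule summable_finite[of "{1}"]) (auto simp: dunit_def)
  thus ?thesis by (simp add: Aplus_def dunit_def)
qed

lemma Aplus_automorphism_comp_op_translation:
  assumes translation: "\<forall>s\<in>halfplane 0. \<phi> s = s + \<i> * of_real \<tau>"
  shows "Aplus_automorphism (comp_op \<phi>)"
proof -
  have C: "comp_op \<phi> a = vtranslate \<tau> a" if "a \<in> Aplus" for a
    using that translation
    by (intro comp_op_eqI vtranslate_Aplus) (auto simp: dirichlet_val_vtranslate)
  have "bij_betw (vtranslate \<tau>) Aplus Aplus"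
    by (rule bij_betwI[where g="vtranslate (- \<tau>)"])
       (auto simp: vtranslate_Aplus vtranslate_inverse dest: vtranslate_inverse[of _ "- \<tau>"])
  hence "bij_betw (comp_op \<phi>) Aplus Aplus"
    by (rule bij_betw_cong[THEN iffD2, rotated]) (simp add: C)
  moreover have "comp_op \<phi> (\<lambda>n. a n + b n) = (\<lambda>n. comp_op \<phi> a n + comp_op \<phi> b n)"
    if "a \<in> Aplus" "b \<in> Aplus" for a b
    using that by (simp add: C Aplus_add) (simp add: vtranslate_def fun_eq_iff algebra_simps)
  moreover have "comp_op \<phi> (\<lambda>n. c * a n) = (\<lambda>n. c * comp_op \<phi> a n)" if "a \<in> Aplus" for c a
    using that by (simp add: C Aplus_scale) (simp add: vtranslate_def fun_eq_iff algebra_simps)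
  moreover have "comp_op \<phi> (dconv a b) = dconv (comp_op \<phi> a) (comp_op \<phi> b)"
    if "a \<in> Aplus" "b \<in> Aplus" for a b
    using that by (simp add: C dconv_Aplus vtranslate_dconv)
  ultimately show ?thesis
    unfolding Aplus_automorphism_def by (simp add: C dunit_Aplus vtranslate_dunit)
qed

section \<open>A mean-value inequality\<close>

lemma tendsto_mean_powers_unimodular:
  fixes z :: complex
  assumes "norm z = 1" "z \<noteq> 1"
  shows "(\<lambda>K. (\<Sum>j<K. z ^ j) / of_nat K) \<longlonglongrightarrow> 0"
proof (rule Lim_null_comparison)
  have "norm ((\<Sum>j<K. z ^ j) / of_nat K) \<le> (2 / norm (z - 1)) / real K" for K
  proof -
    have "norm (z ^ K - 1) \<le> 2"
      using norm_triangle_ineq4[of "z ^ K" 1] assms by (simp add: norm_power)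
    hence "norm (\<Sum>j<K. z ^ j) \<le> 2 / norm (z - 1)"
      using assms by (simp add: geometric_sum norm_divide divide_right_mono)
    hence "norm (\<Sum>j<K. z ^ j) / real K \<le> (2 / norm (z - 1)) / real K"
      by (intro divide_right_mono) auto
    thus ?thesis by (simp add: norm_divide)
  qed
  thus "eventually (\<lambda>K. norm ((\<Sum>j<K. z ^ j) / of_nat K) \<le> (2 / norm (z - 1)) / real K) sequentially"
    by simp
qed (rule lim_const_over_n)

text \<open>Averaging \<open>|P(j)|\<^sup>2\<close> over the nodes \<open>j = 0, \<dots>, K - 1\<close> kills the cross terms as \<open>K \<rightarrow> \<infinity>\<close>.\<close>

lemma sum_norm_square_le_if_exp_sum_bounded:
  fixes \<alpha> :: "nat \<Rightarrow> complex" and \<omega> :: "nat \<Rightarrow> real"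
  assumes fin: "finite I"
    and sep: "\<And>m n. m \<in> I \<Longrightarrow> n \<in> I \<Longrightarrow> m \<noteq> n \<Longrightarrow> exp (\<i> * of_real (\<delta> * (\<omega> m - \<omega> n))) \<noteq> 1"
    and bnd: "\<And>j::nat. norm (\<Sum>n\<in>I. \<alpha> n * exp (\<i> * of_real (real j * \<delta> * \<omega> n))) \<le> B"
  shows "(\<Sum>n\<in>I. norm (\<alpha> n) ^ 2) \<le> B ^ 2"
proof -
  define P where "P j = (\<Sum>n\<in>I. \<alpha> n * exp (\<i> * of_real (real j * \<delta> * \<omega> n)))" for j :: nat
  define z where "z m n = exp (\<i> * of_real (\<delta> * (\<omega> m - \<omega> n)))" for m n
  have sq: "complex_of_real (norm (P j) ^ 2) = (\<Sum>m\<in>I. \<Sum>n\<in>I. \<alpha> m * cnj (\<alpha> n) * z m n ^ j)" for j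
  proof -
    have "exp (\<i> * of_real (real j * \<delta> * \<omega> m)) * cnj (exp (\<i> * of_real (real j * \<delta> * \<omega> n)))
        = z m n ^ j" for m n
    proof -
      have "exp (\<i> * of_real (real j * \<delta> * \<omega> m)) * cnj (exp (\<i> * of_real (real j * \<delta> * \<omega> n)))
          = exp (of_nat j * (\<i> * of_real (\<delta> * (\<omega> m - \<omega> n))))"
        by (simp add: exp_cnj exp_add[symmetric] algebra_simps)
      thus ?thesis by (simp add: z_def exp_of_nat_mult)
    qed
    hence "(\<Sum>m\<in>I. \<Sum>n\<in>I. (\<alpha> m * exp (\<i> * of_real (real j * \<delta> * \<omega> m))) *
                     cnj (\<alpha> n * exp (\<i> * of_real (real j * \<delta> * \<omega> n))))
        = (\<Sum>m\<in>I. \<Sum>n\<in>I. \<alpha> m * cnj (\<alpha> n) * z m n ^ j)"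
      by (intro sum.cong refl) (simp add: algebra_simps)
    moreover have "complex_of_real (norm (P j) ^ 2) = P j * cnj (P j)" by (rule complex_norm_square)
    ultimately show ?thesis unfolding P_def cnj_sum sum_product by simp
  qed
  define avg where "avg K = (\<Sum>j<K. complex_of_real (norm (P j) ^ 2)) / of_nat K" for K
  have avg_eq: "avg K = (\<Sum>m\<in>I. \<Sum>n\<in>I. \<alpha> m * cnj (\<alpha> n) * ((\<Sum>j<K. z m n ^ j) / of_nat K))" for K
    unfolding avg_def sq
    by (simp add: sum.swap[of _ "{..<K}"] sum_divide_distrib sum_distrib_left times_divide_eq_right)
  have lim: "avg \<longlonglongrightarrow> (\<Sum>m\<in>I. \<Sum>n\<in>I. \<alpha> m * cnj (\<alpha> n) * (if m = n then 1 else 0))"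
    unfolding avg_eq[abs_def]
  proof (intro tendsto_sum tendsto_mult tendsto_const)
    fix m n assume mn: "m \<in> I" "n \<in> I"
    show "(\<lambda>K. (\<Sum>j<K. z m n ^ j) / of_nat K) \<longlonglongrightarrow> (if m = n then 1 else 0)"
    proof (cases "m = n")
      case True
      have "eventually (\<lambda>K. 1 = (\<Sum>j<K. z m n ^ j) / of_nat K) sequentially"
        using eventually_gt_at_top[of "0::nat"] by eventually_elim (simp add: z_def True)
      thus ?thesis using True by (simp add: Lim_transform_eventually[OF tendsto_const])
    next
      case False
      thus ?thesis using sep[OF mn False] by (simp add: z_def tendsto_mean_powers_unimodular)
    qed
  qed
  have limv: "(\<Sum>m\<in>I. \<Sum>n\<in>I. \<alpha> m * cnj (\<alpha> n) * (if m = n then 1 else 0))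
      = complex_of_real (\<Sum>m\<in>I. norm (\<alpha> m) ^ 2)"
  proof -
    have "(\<Sum>m\<in>I. \<Sum>n\<in>I. \<alpha> m * cnj (\<alpha> n) * (if m = n then 1 else 0)) = (\<Sum>m\<in>I. \<alpha> m * cnj (\<alpha> m))"
      using fin by (simp add: if_distrib cong: if_cong)
    also have "\<dots> = (\<Sum>m\<in>I. complex_of_real (norm (\<alpha> m) ^ 2))"
      by (rule sum.cong[OF refl]) (simp only: complex_norm_square)
    finally show ?thesis by simp
  qed
  have "(\<lambda>K. Re (avg K)) \<longlonglongrightarrow> (\<Sum>m\<in>I. norm (\<alpha> m) ^ 2)"
    using tendsto_Re[OF lim] unfolding limv by simp
  moreover have "Re (avg K) \<le> B ^ 2" if "K \<ge> 1" for K
  proof -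
    have "(\<Sum>j<K. norm (P j) ^ 2) \<le> (\<Sum>j<K. B ^ 2)"
      by (intro sum_mono power_mono) (auto simp only: P_def bnd norm_ge_zero)
    hence "(\<Sum>j<K. norm (P j) ^ 2) / real K \<le> B ^ 2"
      using that by (simp add: divide_le_eq mult.commute)
    thus ?thesis by (simp add: avg_def Re_divide_of_nat)
  qed
  ultimately show ?thesis by (intro LIMSEQ_le_const2) auto
qed

lemma exp_i_real_neq_1:
  fixes x :: real
  assumes "x \<noteq> 0" "\<bar>x\<bar> < 2 * pi"
  shows "exp (\<i> * of_real x) \<noteq> 1"
proof
  assume "exp (\<i> * of_real x) = 1"
  then obtain k :: int where k: "x = of_int (2 * k) * pi" by (auto simp: exp_eq_1)
  with assms have "\<bar>real_of_int k\<bar> \<ge> 1" by auto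
  hence "\<bar>x\<bar> \<ge> 2 * pi" using k by (simp add: abs_mult)
  with assms show False by simp
qed

lemma exp_i_log_ratio_neq_1:
  assumes "m \<in> {1..N}" "n \<in> {1..N}" "m \<noteq> n"
  shows "exp (\<i> * of_real (1 / (ln (real N) + 1) * (ln (real n) - ln (real m)))) \<noteq> 1"
proof (rule exp_i_real_neq_1)
  define \<delta> where "\<delta> = 1 / (ln (real N) + 1)"
  have "ln (real N) \<ge> 0" using assms by simp
  hence \<delta>: "\<delta> > 0" "\<delta> * ln (real N) < 1" by (auto simp: \<delta>_def field_simps)
  have "ln (real m) \<noteq> ln (real n)" using assms by simp
  thus "\<delta> * (ln (real n) - ln (real m)) \<noteq> 0" using \<delta> by simp
  have "ln (real m) \<le> ln (real N)" "ln (real n) \<le> ln (real N)" "0 \<le> ln (real m)" "0 \<le> ln (real n)"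
    using assms by auto
  hence "\<bar>ln (real n) - ln (real m)\<bar> \<le> ln (real N)" by linarith
  hence "\<bar>\<delta> * (ln (real n) - ln (real m))\<bar> \<le> \<delta> * ln (real N)"
    using \<delta> by (simp add: abs_mult mult_left_mono)
  also have "\<dots> < 2 * pi" using \<delta> pi_gt3 by linarith
  finally show "\<bar>\<delta> * (ln (real n) - ln (real m))\<bar> < 2 * pi" .
qed

lemma norm_dirichlet_partial_sum_le:
  assumes a: "a \<in> Aplus" and bd: "\<forall>s\<in>halfplane 0. norm (dirichlet_val a s) \<le> 1"
    and w: "Re w > 0"
  shows "norm (\<Sum>n\<le>N. a n * of_nat n powr (- w)) \<le> 1 + (\<Sum>n. norm (a n)) * real (Suc N) powr (- Re w)"
proof -
  have "norm (\<Sum>n\<le>N. a n * of_nat n powr (- w))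
      \<le> norm (dirichlet_val a w) + norm (dirichlet_val a w - (\<Sum>n\<le>N. a n * of_nat n powr (- w)))"
    by (smt (verit) norm_minus_commute norm_triangle_sub)
  also have "norm (dirichlet_val a w) \<le> 1" using bd w by (simp add: halfplane_def)
  also have "norm (dirichlet_val a w - (\<Sum>n\<le>N. a n * of_nat n powr (- w)))
      \<le> (\<Sum>n. norm (a n)) * real (Suc N) powr (- Re w)"
    using dirichlet_tail_bound[OF Aplus_dirichlet_abs_summable[OF a], of w N] w
    unfolding Aplus_weight_0[OF a] by simp
  finally show ?thesis by simp
qed

text \<open>On the vertical line \<open>Re s = \<sigma>\<close> a partial sum is a trigonometric polynomial with the
  frequencies \<open>- ln n\<close>; sampling it at the points \<open>\<sigma> + i j \<delta>\<close> gives the mean-value inequality.\<close>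

lemma Aplus_partial_square_sum_le:
  assumes a: "a \<in> Aplus" and bd: "\<forall>s\<in>halfplane 0. norm (dirichlet_val a s) \<le> 1"
    and \<sigma>: "\<sigma> > 0" and N: "N \<ge> 1"
  shows "(\<Sum>n\<in>{1..N}. norm (a n * of_nat n powr (- of_real \<sigma>)) ^ 2)
          \<le> (1 + (\<Sum>n. norm (a n)) * real (Suc N) powr (- \<sigma>)) ^ 2"
proof (rule sum_norm_square_le_if_exp_sum_bounded[where \<omega>="\<lambda>n. - ln (real n)"
      and \<delta>="1 / (ln (real N) + 1)"])
  fix m n assume "m \<in> {1..N}" "n \<in> {1..N}" "m \<noteq> n"
  thus "exp (\<i> * of_real (1 / (ln (real N) + 1) * (- ln (real m) - - ln (real n)))) \<noteq> 1"
    using exp_i_log_ratio_neq_1 by simp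
next
  fix j :: nat
  define t where "t = real j * (1 / (ln (real N) + 1))"
  define w where "w = of_real \<sigma> + \<i> * of_real t"
  have "(\<Sum>n\<le>N. a n * of_nat n powr (- w)) = (\<Sum>n\<in>{1..N}. a n * of_nat n powr (- w))"
    by (rule sum.mono_neutral_right) (auto simp: not_le)
  also have "\<dots> = (\<Sum>n\<in>{1..N}. a n * of_nat n powr (- of_real \<sigma>) *
                      exp (\<i> * of_real (real j * (1 / (ln (real N) + 1)) * - ln (real n))))"
  proof (rule sum.cong[OF refl])
    fix n assume "n \<in> {1..N}"
    have "(of_nat n :: complex) powr (- w) = of_nat n powr (- of_real \<sigma>) * of_nat n powr (- (\<i> * of_real t))"
      by (simp add: w_def powr_add[symmetric])
    also have "(of_nat n :: complex) powr (- (\<i> * of_real t)) = exp (\<i> * of_real (t * - ln (real n)))"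
      using \<open>n \<in> {1..N}\<close> by (simp add: powr_def algebra_simps)
    finally show "a n * of_nat n powr (- w) = a n * of_nat n powr (- of_real \<sigma>) *
                      exp (\<i> * of_real (real j * (1 / (ln (real N) + 1)) * - ln (real n)))"
      by (simp add: t_def mult.assoc)
  qed
  finally show "norm (\<Sum>n\<in>{1..N}. a n * of_nat n powr (- of_real \<sigma>) *
                      exp (\<i> * of_real (real j * (1 / (ln (real N) + 1)) * - ln (real n))))
        \<le> 1 + (\<Sum>n. norm (a n)) * real (Suc N) powr (- \<sigma>)"
    using norm_dirichlet_partial_sum_le[OF a bd, where w=w and N=N] \<sigma> by (simp add: w_def t_def)
qed simp

lemma Aplus_square_sum_le_1:
  assumes a: "a \<in> Aplus" and bd: "\<forall>s\<in>halfplane 0. norm (dirichlet_val a s) \<le> 1"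
    and F: "finite F"
  shows "(\<Sum>n\<in>F. norm (a n) ^ 2) \<le> 1"
proof -
  define F' where "F' = F - {0}"
  define N0 where "N0 = Max (insert 1 F')"
  have F'N0: "F' \<subseteq> {1..N0}" using F by (auto simp: F'_def N0_def)
  have N0: "N0 \<ge> 1" unfolding N0_def by (rule Max_ge) (use F in \<open>auto simp: F'_def\<close>)
  define S where "S = (\<Sum>n. norm (a n))"
  have weighted: "(\<Sum>n\<in>F'. norm (a n * of_nat n powr (- of_real \<sigma>)) ^ 2) \<le> 1" if \<sigma>: "\<sigma> > 0" for \<sigma>
  proof (rule LIMSEQ_le_const[where X="\<lambda>N. (1 + S * real (Suc N) powr (- \<sigma>)) ^ 2"])
    have "(\<lambda>N. real (Suc N) powr (- \<sigma>)) \<longlonglongrightarrow> 0"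
      by (rule tendsto_neg_powr)
         (use \<sigma> filterlim_compose[OF filterlim_real_sequentially filterlim_Suc] in auto)
    hence "(\<lambda>N. (1 + S * real (Suc N) powr (- \<sigma>)) ^ 2) \<longlonglongrightarrow> (1 + S * 0) ^ 2"
      by (intro tendsto_intros)
    thus "(\<lambda>N. (1 + S * real (Suc N) powr (- \<sigma>)) ^ 2) \<longlonglongrightarrow> 1" by simp
    show "\<exists>N. \<forall>n\<ge>N. (\<Sum>n\<in>F'. norm (a n * of_nat n powr (- of_real \<sigma>)) ^ 2) \<le> (1 + S * real (Suc n) powr (- \<sigma>)) ^ 2"
    proof (intro exI[of _ N0] allI impI)
      fix n assume n: "n \<ge> N0"
      have "(\<Sum>n\<in>F'. norm (a n * of_nat n powr (- of_real \<sigma>)) ^ 2)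
          \<le> (\<Sum>k\<in>{1..n}. norm (a k * of_nat k powr (- of_real \<sigma>)) ^ 2)"
        by (rule sum_mono2) (use F'N0 n in auto)
      also have "\<dots> \<le> (1 + S * real (Suc n) powr (- \<sigma>)) ^ 2"
        unfolding S_def using n N0 by (intro Aplus_partial_square_sum_le[OF a bd \<sigma>]) auto
      finally show "(\<Sum>n\<in>F'. norm (a n * of_nat n powr (- of_real \<sigma>)) ^ 2) \<le> (1 + S * real (Suc n) powr (- \<sigma>)) ^ 2" .
    qed
  qed
  have "(\<lambda>j. \<Sum>n\<in>F'. norm (a n * of_nat n powr (- of_real (1 / real (Suc j)))) ^ 2)
      \<longlonglongrightarrow> (\<Sum>n\<in>F'. norm (a n) ^ 2)"
  proof (intro tendsto_sum)
    fix n assume "n \<in> F'"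
    hence n: "n \<ge> 1" using F'N0 by auto
    have "(\<lambda>j. real n powr (- (1 / real (Suc j)))) \<longlonglongrightarrow> real n powr (- 0)"
      by (rule tendsto_powr'[OF tendsto_const tendsto_minus[OF LIMSEQ_Suc[OF lim_1_over_n]]])
         (use n in auto)
    hence "(\<lambda>j. (norm (a n) * real n powr (- (1 / real (Suc j)))) ^ 2) \<longlonglongrightarrow> (norm (a n) * real n powr (- 0)) ^ 2"
      by (intro tendsto_power tendsto_mult tendsto_const)
    thus "(\<lambda>j. norm (a n * of_nat n powr (- of_real (1 / real (Suc j)))) ^ 2) \<longlonglongrightarrow> norm (a n) ^ 2"
      using n by (simp add: norm_mult norm_of_nat_powr)
  qed
  hence "(\<Sum>n\<in>F'. norm (a n) ^ 2) \<le> 1"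
  proof (rule LIMSEQ_le_const2, intro exI allI impI)
    fix j :: nat
    show "(\<Sum>n\<in>F'. norm (a n * of_nat n powr (- of_real (1 / real (Suc j)))) ^ 2) \<le> 1"
      by (rule weighted) simp
  qed
  moreover have "(\<Sum>n\<in>F. norm (a n) ^ 2) = (\<Sum>n\<in>F'. norm (a n) ^ 2)"
    using a F by (auto simp: F'_def Aplus_def intro!: sum.mono_neutral_right)
  ultimately show ?thesis by simp
qed

section \<open>Preimages of the monomials \<open>k\<^sup>-\<^sup>s\<close> under an automorphism\<close>

definition dmonomial :: "nat \<Rightarrow> nat \<Rightarrow> complex" where
  "dmonomial k n = (if n = k then 1 else 0)"

lemma dmonomial_Aplus:
  assumes "k \<ge> 1"
  shows "dmonomial k \<in> Aplus"
proof -
  have "summable (\<lambda>n. norm (dmonomial k n))"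
    by (rule summable_finite[of "{k}"]) (auto simp: dmonomial_def)
  thus ?thesis using assms by (simp add: Aplus_def dmonomial_def)
qed

lemma dirichlet_val_dmonomial: "dirichlet_val (dmonomial k) w = of_nat k powr (- w)"
proof -
  have "(\<lambda>n. dmonomial k n * of_nat n powr (- w)) = (\<lambda>n. if n = k then of_nat k powr (- w) else 0)"
    by (auto simp: dmonomial_def)
  thus ?thesis using sums_single[of k "\<lambda>_. of_nat k powr (- w)"]
    by (simp add: dirichlet_val_def sums_iff)
qed

lemma dirichlet_val_dunit: "dirichlet_val dunit w = 1"
proof -
  have "dunit = dmonomial 1" by (simp add: dunit_def dmonomial_def fun_eq_iff)
  thus ?thesis using dirichlet_val_dmonomial[of 1 w] by simp
qed

text \<open>The inverse is the geometric series \<open>\<Sum>\<^sub>j \<mu>\<^sup>-\<^sup>j\<^sup>-\<^sup>1 (k\<^sup>j)\<^sup>-\<^sup>s\<close>.\<close>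

lemma Aplus_inverse_const_minus_dmonomial:
  fixes \<mu> :: complex
  assumes k: "k \<ge> 2" and \<mu>: "norm \<mu> > 1"
  obtains v where "v \<in> Aplus" "\<And>w. Re w \<ge> 0 \<Longrightarrow> dirichlet_val v w = 1 / (\<mu> - of_nat k powr (- w))"
proof -
  define g where "g j = k ^ j" for j
  have sm: "strict_mono g" using k by (auto simp: g_def strict_mono_def intro: power_strict_increasing)
  define v where "v n = (if n \<in> range g then (1 / \<mu>) ^ Suc (inv g n) else 0)" for n
  have vg: "v (g j) = (1 / \<mu>) ^ Suc j" for j
    by (simp add: v_def inv_f_f[OF strict_mono_imp_inj_on[OF sm]])
  have nl: "norm (1 / \<mu>) < 1" using \<mu> by (simp add: norm_divide divide_less_eq)
  have "summable (\<lambda>j. norm (1 / \<mu>) * norm (1 / \<mu>) ^ j)"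
    by (rule summable_mult) (use summable_geometric[of "norm (1 / \<mu>)"] nl in simp)
  hence "summable (\<lambda>j. norm (v (g j)))"
    by (simp only: vg norm_power power_Suc norm_mult)
  hence "summable (\<lambda>n. norm (v n))"
    by (subst (asm) summable_mono_reindex[OF sm, where f="\<lambda>n. norm (v n)"]) (auto simp: v_def)
  moreover have "v 0 = 0" using k by (auto simp: v_def g_def)
  ultimately have vA: "v \<in> Aplus" by (simp add: Aplus_def)
  show ?thesis
  proof (rule that[OF vA])
    fix w :: complex assume w: "Re w \<ge> 0"
    define q where "q = of_nat k powr (- w) / \<mu>"
    have nq: "norm q < 1"
      using norm_of_nat_powr_neg_le_1[OF w, of k] \<mu> by (simp add: q_def norm_divide divide_less_eq)
    have "v (g j) * of_nat (g j) powr (- w) = (1 / \<mu>) ^ Suc j * (of_nat k powr (- w)) ^ j" for j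
      unfolding vg by (simp only: g_def of_nat_power_powr)
    hence "v (g j) * of_nat (g j) powr (- w) = (1 / \<mu>) * q ^ j" for j
      by (simp add: q_def power_divide field_simps)
    moreover have "(\<lambda>j. (1 / \<mu>) * q ^ j) sums ((1 / \<mu>) * (1 / (1 - q)))"
      by (rule sums_mult[OF geometric_sums[OF nq]])
    ultimately have "(\<lambda>j. v (g j) * of_nat (g j) powr (- w)) sums ((1 / \<mu>) * (1 / (1 - q)))"
      by simp
    hence "(\<lambda>n. v n * of_nat n powr (- w)) sums ((1 / \<mu>) * (1 / (1 - q)))"
      by (subst (asm) sums_mono_reindex[OF sm, where f="\<lambda>n. v n * of_nat n powr (- w)"])
         (auto simp: v_def)
    moreover have "(1 / \<mu>) * (1 / (1 - q)) = 1 / (\<mu> - of_nat k powr (- w))"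
      using \<mu> nq by (auto simp: q_def field_simps)
    ultimately show "dirichlet_val v w = 1 / (\<mu> - of_nat k powr (- w))"
      by (simp add: dirichlet_val_def sums_iff)
  qed
qed

text \<open>If \<open>|f\<^sub>u(w\<^sub>0)| > 1\<close> then \<open>\<mu> - k\<^sup>-\<^sup>s\<close> with \<open>\<mu> = f\<^sub>u(w\<^sub>0)\<close> is invertible, hence so is its preimage
  \<open>\<mu> - u\<close>; but the Dirichlet series of \<open>\<mu> - u\<close> vanishes at \<open>w\<^sub>0\<close>.\<close>

lemma norm_dirichlet_val_preimage_dmonomial_le_1:
  assumes T: "Aplus_automorphism T"
    and u: "u \<in> Aplus" and Tu: "T u = dmonomial k" and k: "k \<ge> 2"
    and w0: "Re w0 \<ge> 0"
  shows "norm (dirichlet_val u w0) \<le> 1"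
proof (rule ccontr)
  define \<mu> where "\<mu> = dirichlet_val u w0"
  assume "\<not> norm (dirichlet_val u w0) \<le> 1"
  hence big: "norm \<mu> > 1" by (simp add: \<mu>_def)
  have bij: "bij_betw T Aplus Aplus"
    and add: "\<forall>a\<in>Aplus. \<forall>b\<in>Aplus. T (\<lambda>n. a n + b n) = (\<lambda>n. T a n + T b n)"
    and scale: "\<forall>c. \<forall>a\<in>Aplus. T (\<lambda>n. c * a n) = (\<lambda>n. c * T a n)"
    and mult: "\<forall>a\<in>Aplus. \<forall>b\<in>Aplus. T (dconv a b) = dconv (T a) (T b)"
    and unit: "T dunit = dunit"
    using T by (auto simp: Aplus_automorphism_def)
  obtain v where vA: "v \<in> Aplus"
    and v: "\<And>w. Re w \<ge> 0 \<Longrightarrow> dirichlet_val v w = 1 / (\<mu> - of_nat k powr (- w))"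
    using Aplus_inverse_const_minus_dmonomial[OF k big] by blast
  have eA: "dmonomial k \<in> Aplus" using k by (intro dmonomial_Aplus) auto
  define y where "y = (\<lambda>n. \<mu> * dunit n + (-1) * u n)"
  define y' where "y' = (\<lambda>n. \<mu> * dunit n + (-1) * dmonomial k n)"
  have yA: "y \<in> Aplus" and y'A: "y' \<in> Aplus"
    unfolding y_def y'_def by (intro Aplus_add Aplus_scale dunit_Aplus u eA)+
  have val: "dirichlet_val (\<lambda>n. \<mu> * dunit n + (-1) * b n) w = \<mu> - dirichlet_val b w"
    if "b \<in> Aplus" "Re w \<ge> 0" for b w
  proof -
    have "dirichlet_val (\<lambda>n. \<mu> * dunit n + (-1) * b n) w
        = dirichlet_val (\<lambda>n. \<mu> * dunit n) w + dirichlet_val (\<lambda>n. (-1) * b n) w"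
      by (rule dirichlet_val_add[OF Aplus_scale[OF dunit_Aplus] Aplus_scale[OF that(1)] that(2)])
    also have "\<dots> = \<mu> * 1 + (-1) * dirichlet_val b w"
      by (simp only: dirichlet_val_scale[OF dunit_Aplus that(2)] dirichlet_val_scale[OF that]
          dirichlet_val_dunit)
    finally show ?thesis by simp
  qed
  have val_y: "dirichlet_val y w = \<mu> - dirichlet_val u w"
    and val_y': "dirichlet_val y' w = \<mu> - of_nat k powr (- w)" if "Re w \<ge> 0" for w
    using val[OF u that] val[OF eA that] unfolding y_def y'_def dirichlet_val_dmonomial by simp_all
  have "dconv y' v = dunit"
  proof (rule Aplus_eqI[OF dconv_Aplus[OF y'A vA] dunit_Aplus], intro ballI)
    fix s assume "s \<in> halfplane 0"
    hence s: "Re s \<ge> 0" by (simp add: halfplane_def)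
    have "\<mu> - of_nat k powr (- s) \<noteq> 0"
      using norm_of_nat_powr_neg_le_1[OF s, of k] big by auto
    thus "dirichlet_val (dconv y' v) s = dirichlet_val dunit s"
      using s by (simp add: dirichlet_val_dconv[OF y'A vA s] v val_y' dirichlet_val_dunit)
  qed
  moreover obtain x where xA: "x \<in> Aplus" and Tx: "T x = v"
    using bij vA by (metis bij_betw_imp_surj_on imageE)
  moreover have "T y = y'"
  proof -
    have "T y = (\<lambda>n. T (\<lambda>n. \<mu> * dunit n) n + T (\<lambda>n. (-1) * u n) n)"
      unfolding y_def by (rule add[rule_format, OF Aplus_scale[OF dunit_Aplus] Aplus_scale[OF u]])
    moreover have "T (\<lambda>n. \<mu> * dunit n) = (\<lambda>n. \<mu> * T dunit n)" using scale dunit_Aplus by blast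
    moreover have "T (\<lambda>n. (-1) * u n) = (\<lambda>n. (-1) * T u n)" using scale u by blast
    ultimately show ?thesis by (simp only: unit Tu y'_def)
  qed
  ultimately have "T (dconv y x) = T dunit"
    using mult yA unit by simp
  hence "dconv y x = dunit"
    using bij_betw_imp_inj_on[OF bij] dconv_Aplus[OF yA xA] dunit_Aplus by (auto dest: inj_onD)
  hence "dirichlet_val y w0 * dirichlet_val x w0 = 1"
    using dirichlet_val_dconv[OF yA xA w0] dirichlet_val_dunit by simp
  moreover have "dirichlet_val y w0 = 0" using val_y[OF w0] by (simp add: \<mu>_def)
  ultimately show False by simp
qed

section \<open>Composition operators of the form \<open>c\<^sub>0 s + \<psi>(s)\<close>\<close>

lemma Dclass_expansion:
  assumes "\<psi> \<in> Dclass"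
  obtains c \<sigma> where "\<sigma> > 0" "dirichlet_abs_summable c \<sigma>"
    "\<And>w. Re w \<ge> \<sigma> \<Longrightarrow> \<psi> w = dirichlet_val c w"
proof -
  obtain c :: "nat \<Rightarrow> complex" and \<sigma>0 :: real where
    conv: "\<And>s. Re s > \<sigma>0 \<Longrightarrow> (\<lambda>n. c n * of_nat n powr (- s)) sums \<psi> s"
    using assms unfolding Dclass_def by blast
  define s0 where "s0 = max \<sigma>0 0 + 1"
  have "summable (\<lambda>n. c n * of_nat n powr (- of_real s0))"
    using conv[of "of_real s0"] sums_summable by (force simp: s0_def)
  hence "(\<lambda>n. c n * of_nat n powr (- of_real s0)) \<longlonglongrightarrow> 0" by (rule summable_LIMSEQ_zero)
  hence "Bseq (\<lambda>n. c n * of_nat n powr (- of_real s0))" by (intro convergent_imp_Bseq convergentI)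
  then obtain B where B: "B > 0" "\<And>n. norm (c n * of_nat n powr (- of_real s0)) \<le> B"
    by (auto elim: BseqE)
  txt \<open>Convergence at \<open>s\<^sub>0\<close> bounds the terms; two more units to the right give absolute convergence.\<close>
  have le: "norm (norm (c n) * real n powr (- (s0 + 2))) \<le> B * real n powr (-2)" for n
  proof (cases "n = 0")
    case False
    have "norm (c n) * real n powr (- (s0 + 2)) = norm (c n * of_nat n powr (- of_real s0)) * real n powr (-2)"
      using False by (simp add: norm_mult norm_of_nat_powr powr_add[symmetric])
    thus ?thesis using B(2)[of n] by (simp add: mult_right_mono)
  qed simp
  have "summable (\<lambda>n. B * real n powr (-2))"
    by (intro summable_mult) (simp add: summable_real_powr_iff)
  hence "dirichlet_abs_summable c (s0 + 2)"
    unfolding dirichlet_abs_summable_def by (rule summable_comparison_test[rotated]) (use le in auto)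
  moreover have "\<psi> w = dirichlet_val c w" if "Re w \<ge> s0 + 2" for w
    using conv[of w] that by (simp add: s0_def dirichlet_val_def sums_iff)
  ultimately show ?thesis by (intro that[of "s0 + 2"]) (auto simp: s0_def)
qed

lemma eventually_Re_comp_ge:
  assumes form: "\<forall>s\<in>halfplane 0. \<phi> s = of_nat c0 * s + \<psi> s"
    and \<sigma>: "\<sigma> > 0" and summ: "dirichlet_abs_summable c \<sigma>"
    and \<psi>: "\<And>w. Re w \<ge> \<sigma> \<Longrightarrow> \<psi> w = dirichlet_val c w"
  shows "eventually (\<lambda>x::real. Re (\<phi> (of_real x)) \<ge> real c0 * x - (\<Sum>n. norm (c n) * real n powr (- \<sigma>))) at_top"
  using eventually_ge_at_top[of \<sigma>]
proof eventually_elim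
  case (elim x)
  have "norm (\<psi> (of_real x)) \<le> (\<Sum>n. norm (c n) * real n powr (- \<sigma>))"
    using norm_dirichlet_val_le[OF summ, of "of_real x"] \<psi>[of "of_real x"] elim by simp
  hence "Re (\<psi> (of_real x)) \<ge> - (\<Sum>n. norm (c n) * real n powr (- \<sigma>))"
    using abs_Re_le_cmod[of "\<psi> (of_real x)"] by linarith
  thus ?case using form elim \<sigma> by (simp add: halfplane_def)
qed

lemma filterlim_Re_comp_at_top:
  assumes "eventually (\<lambda>x::real. Re (\<phi> (of_real x)) \<ge> real c0 * x - S) at_top" and "c0 \<ge> 1"
  shows "filterlim (\<lambda>x::real. Re (\<phi> (of_real x))) at_top at_top"
proof (rule filterlim_at_top_mono[OF _ assms(1)])
  have "filterlim (\<lambda>x::real. - S + real c0 * x) at_top at_top"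
    by (rule filterlim_tendsto_add_at_top[OF tendsto_const])
       (rule filterlim_tendsto_pos_mult_at_top[OF tendsto_const _ filterlim_ident], use assms(2) in simp)
  thus "filterlim (\<lambda>x::real. real c0 * x - S) at_top at_top" by (simp add: algebra_simps)
qed

lemma comp_op_preimage_dmonomial:
  assumes bounded: "\<forall>a\<in>Aplus. \<exists>b\<in>Aplus. \<forall>s\<in>halfplane 0. dirichlet_val b s = dirichlet_val a (\<phi> s)"
    and auto: "Aplus_automorphism (comp_op \<phi>)" and k: "k \<ge> 1"
  obtains u where "u \<in> Aplus" "comp_op \<phi> u = dmonomial k"
    "\<And>s. s \<in> halfplane 0 \<Longrightarrow> dirichlet_val u (\<phi> s) = of_nat k powr (- s)"
proof -
  obtain u where u: "u \<in> Aplus" "comp_op \<phi> u = dmonomial k"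
    using auto dmonomial_Aplus[OF k]
    by (metis Aplus_automorphism_def bij_betw_imp_surj_on imageE)
  thus ?thesis
    using that comp_op_Aplus_dirichlet_val(2)[OF bounded u(1)] by (simp add: dirichlet_val_dmonomial)
qed

lemma coeffs_of_dirichlet_val_eq_2_powr:
  assumes a: "a \<in> Aplus" and F: "F \<noteq> bot"
    and W: "filterlim (\<lambda>x. Re (W x)) at_top F" and V: "filterlim (\<lambda>x. Re (V x)) at_top F"
    and eq: "eventually (\<lambda>x. dirichlet_val a (W x) = of_nat 2 powr (- V x)) F"
  shows "a 1 = 0" and "((\<lambda>x. of_nat 2 powr W x * of_nat 2 powr (- V x)) \<longlongrightarrow> a 2) F"
proof -
  note summ = Aplus_dirichlet_abs_summable[OF a]
  have "((\<lambda>x. dirichlet_val a (W x)) \<longlongrightarrow> 0) F"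
    by (rule Lim_transform_eventually[OF of_nat_powr_neg_tendsto_0[OF _ V]])
       (use eq in \<open>auto elim: eventually_mono\<close>)
  with tendsto_dirichlet_val_first_coeff[OF summ W] F show a1: "a 1 = 0"
    using tendsto_unique by metis
  show "((\<lambda>x. of_nat 2 powr W x * of_nat 2 powr (- V x)) \<longlongrightarrow> a 2) F"
    using tendsto_dirichlet_val_next_coeff[OF summ _ _ W, of 2] a1
    by (simp add: Lim_transform_eventually[OF _ eventually_mono[OF eq]])
qed

lemma dilation_ge_2_impossible:
  assumes u: "u \<in> Aplus" and u_comp: "\<And>s. s \<in> halfplane 0 \<Longrightarrow> dirichlet_val u (\<phi> s) = of_nat 2 powr (- s)"
    and ev: "eventually (\<lambda>x::real. Re (\<phi> (of_real x)) \<ge> real c0 * x - S) at_top" and c0: "c0 \<ge> 2"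
  shows False
proof -
  have "eventually (\<lambda>x::real. dirichlet_val u (\<phi> (of_real x)) = of_nat 2 powr (- of_real x)) at_top"
    using eventually_gt_at_top[of 0] by eventually_elim (simp add: u_comp halfplane_def)
  from coeffs_of_dirichlet_val_eq_2_powr(2)[OF u _ filterlim_Re_comp_at_top[OF ev] _ this] c0
  have lim: "((\<lambda>x::real. of_nat 2 powr \<phi> (of_real x) * of_nat 2 powr (- of_real x)) \<longlongrightarrow> u 2) at_top"
    by (simp add: filterlim_ident)
  have "filterlim (\<lambda>x::real. norm (of_nat 2 powr \<phi> (of_real x) * of_nat 2 powr (- of_real x) :: complex))
          at_top at_top"
  proof (rule filterlim_at_top_mono)
    show "filterlim (\<lambda>x::real. 2 powr (x - S)) at_top at_top"
      using filterlim_tendsto_add_at_top[OF tendsto_const filterlim_ident, of "- S"]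
      by (intro filterlim_powr_at_top_if_base_greater_1) (auto simp: algebra_simps)
    show "eventually (\<lambda>x. 2 powr (x - S) \<le> norm (of_nat 2 powr \<phi> (of_real x) * of_nat 2 powr (- of_real x) :: complex)) at_top"
      using eventually_conj[OF ev eventually_ge_at_top[of "0::real"]]
    proof eventually_elim
      case (elim x)
      have "real c0 * x \<ge> 2 * x" using c0 elim by (intro mult_right_mono) auto
      hence "2 powr (x - S) \<le> 2 powr (Re (\<phi> (of_real x)) - x)" using elim by simp
      also have "\<dots> = norm (of_nat 2 powr \<phi> (of_real x) * of_nat 2 powr (- of_real x) :: complex)"
        by (simp only: norm_mult norm_of_nat_powr) (simp add: powr_add[symmetric])
      finally show ?case .
    qed
  qed
  thus False
    using not_tendsto_and_filterlim_at_infinity[OF _ lim filterlim_norm_at_top_imp_at_infinity] by simp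
qed

lemma norm_coeff_le_1:
  assumes "a \<in> Aplus" "\<forall>s\<in>halfplane 0. norm (dirichlet_val a s) \<le> 1"
  shows "norm (a n) \<le> 1"
proof -
  have "norm (a n) ^ 2 \<le> 1 ^ 2" using Aplus_square_sum_le_1[OF assms, of "{n}"] by simp
  thus ?thesis by (rule power2_le_imp_le) simp
qed

lemma Aplus_eq_dmonomial_if_norm_coeff_ge_1:
  assumes a: "a \<in> Aplus" and bd: "\<forall>s\<in>halfplane 0. norm (dirichlet_val a s) \<le> 1"
    and ak: "norm (a k) \<ge> 1"
  obtains c where "norm c = 1" "a = (\<lambda>n. c * dmonomial k n)"
proof -
  have ak1: "norm (a k) = 1" using norm_coeff_le_1[OF a bd, of k] ak by simp
  have "a n = 0" if "n \<noteq> k" for n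
  proof -
    have "norm (a k) ^ 2 + norm (a n) ^ 2 \<le> 1"
      using Aplus_square_sum_le_1[OF a bd, of "{k, n}"] that by simp
    thus ?thesis using ak1 by simp
  qed
  hence "a = (\<lambda>n. a k * dmonomial k n)" by (auto simp: dmonomial_def fun_eq_iff)
  with ak1 show ?thesis by (rule that)
qed

text \<open>With \<open>f\<^sub>u \<circ> \<phi> = 2\<^sup>-\<^sup>s\<close> and \<open>b = C\<^sub>\<phi>(2\<^sup>-\<^sup>s)\<close>, the second coefficients satisfy \<open>b\<^sub>2 u\<^sub>2 = 1\<close>,
  while both Dirichlet series are bounded by \<open>1\<close>; the mean-value inequality then forces
  \<open>b = b\<^sub>2 2\<^sup>-\<^sup>s\<close> with \<open>|b\<^sub>2| = 1\<close>.\<close>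

lemma comp_2_powr_eq_unimodular_mult:
  assumes auto: "Aplus_automorphism (comp_op \<phi>)"
    and bounded: "\<forall>a\<in>Aplus. \<exists>b\<in>Aplus. \<forall>s\<in>halfplane 0. dirichlet_val b s = dirichlet_val a (\<phi> s)"
    and maps: "\<phi> ` halfplane 0 \<subseteq> halfplane 0"
    and top: "filterlim (\<lambda>x::real. Re (\<phi> (of_real x))) at_top at_top"
  obtains c where "norm c = 1"
    "\<And>s. s \<in> halfplane 0 \<Longrightarrow> of_nat 2 powr (- \<phi> s) = c * of_nat 2 powr (- s)"
proof -
  obtain u where uA: "u \<in> Aplus" and Tu: "comp_op \<phi> u = dmonomial 2"
    and u_comp: "\<And>s. s \<in> halfplane 0 \<Longrightarrow> dirichlet_val u (\<phi> s) = of_nat 2 powr (- s)"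
    using comp_op_preimage_dmonomial[OF bounded auto, of 2] by auto
  define b where "b = comp_op \<phi> (dmonomial 2)"
  have bA: "b \<in> Aplus"
    and b_val: "\<And>s. s \<in> halfplane 0 \<Longrightarrow> dirichlet_val b s = of_nat 2 powr (- \<phi> s)"
    using comp_op_Aplus_dirichlet_val[OF bounded dmonomial_Aplus[of 2]]
    by (auto simp: b_def dirichlet_val_dmonomial)
  have real_top: "filterlim (\<lambda>x::real. Re (of_real x :: complex)) at_top at_top"
    by (simp add: filterlim_ident)
  have "eventually (\<lambda>x::real. dirichlet_val u (\<phi> (of_real x)) = of_nat 2 powr (- of_real x)) at_top"
    using eventually_gt_at_top[of 0] by eventually_elim (simp add: u_comp halfplane_def)
  with coeffs_of_dirichlet_val_eq_2_powr(2)[OF uA _ top real_top]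
  have Lu: "((\<lambda>x::real. of_nat 2 powr \<phi> (of_real x) * of_nat 2 powr (- of_real x)) \<longlongrightarrow> u 2) at_top"
    by simp
  have "eventually (\<lambda>x::real. dirichlet_val b (of_real x) = of_nat 2 powr (- \<phi> (of_real x))) at_top"
    using eventually_gt_at_top[of 0] by eventually_elim (simp add: b_val halfplane_def)
  with coeffs_of_dirichlet_val_eq_2_powr(2)[OF bA _ real_top top]
  have Lb: "((\<lambda>x::real. of_nat 2 powr of_real x * of_nat 2 powr (- \<phi> (of_real x))) \<longlongrightarrow> b 2) at_top"
    by simp
  have "((\<lambda>x::real. (of_nat 2 powr of_real x * of_nat 2 powr (- \<phi> (of_real x))) *
          (of_nat 2 powr \<phi> (of_real x) * of_nat 2 powr (- of_real x))) \<longlongrightarrow> b 2 * u 2) at_top"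
    by (rule tendsto_mult[OF Lb Lu])
  moreover have "(of_nat 2 powr of_real x * of_nat 2 powr (- \<phi> (of_real x))) *
          (of_nat 2 powr \<phi> (of_real x) * of_nat 2 powr (- of_real x)) = (1::complex)" for x
  proof -
    have "(of_nat 2 powr of_real x * of_nat 2 powr (- \<phi> (of_real x))) *
          (of_nat 2 powr \<phi> (of_real x) * of_nat 2 powr (- of_real x))
        = (of_nat 2 powr of_real x * of_nat 2 powr (- of_real x)) *
          (of_nat 2 powr \<phi> (of_real x) * (of_nat 2 :: complex) powr (- \<phi> (of_real x)))"
      by (simp only: ac_simps)
    moreover have "(of_nat 2 :: complex) powr w * of_nat 2 powr (- w) = 1" for w
      by (rule of_nat_powr_cancel) simp
    ultimately show ?thesis by (simp only: mult_1)
  qed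
  ultimately have bu: "b 2 * u 2 = 1" by (simp add: tendsto_const_iff)
  have b_bd: "\<forall>s\<in>halfplane 0. norm (dirichlet_val b s) \<le> 1"
  proof
    fix s assume s: "s \<in> halfplane 0"
    hence "Re (\<phi> s) > 0" using maps by (auto simp: halfplane_def)
    thus "norm (dirichlet_val b s) \<le> 1" using b_val[OF s] norm_of_nat_powr_neg_le_1[of "\<phi> s" 2] by simp
  qed
  have "\<forall>s\<in>halfplane 0. norm (dirichlet_val u s) \<le> 1"
    using norm_dirichlet_val_preimage_dmonomial_le_1[OF auto uA Tu] by (auto simp: halfplane_def)
  hence "norm (u 2) \<le> 1" by (rule norm_coeff_le_1[OF uA])
  moreover have "norm (b 2) * norm (u 2) = 1" using bu by (metis norm_mult norm_one)
  ultimately have "norm (b 2) \<ge> 1" by (metis mult_left_le norm_ge_zero)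
  then obtain c where c: "norm c = 1" and b: "b = (\<lambda>n. c * dmonomial 2 n)"
    by (rule Aplus_eq_dmonomial_if_norm_coeff_ge_1[OF bA b_bd])
  show ?thesis
  proof (rule that[OF c])
    fix s assume s: "s \<in> halfplane 0"
    have "of_nat 2 powr (- \<phi> s) = dirichlet_val (\<lambda>n. c * dmonomial 2 n) s"
      using b_val[OF s] by (simp add: b)
    also have "\<dots> = c * of_nat 2 powr (- s)"
      using s by (simp add: dirichlet_val_scale dmonomial_Aplus dirichlet_val_dmonomial halfplane_def)
    finally show "of_nat 2 powr (- \<phi> s) = c * of_nat 2 powr (- s)" .
  qed
qed

lemma translation_if_2_powr_ratio_unimodular:
  assumes hol: "\<phi> holomorphic_on halfplane 0" and c: "norm c = 1"
    and eq: "\<And>s. s \<in> halfplane 0 \<Longrightarrow> of_nat 2 powr (- \<phi> s) = c * of_nat 2 powr (- s)"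
  shows "\<exists>\<tau>::real. \<forall>s\<in>halfplane 0. \<phi> s = s + \<i> * of_real \<tau>"
proof -
  define D where "D s = \<phi> s - s" for s
  have two_powr: "(of_nat 2 :: complex) powr z = exp (z * of_real (ln 2))" for z
  proof -
    have "Ln (of_nat 2 :: complex) = of_real (ln (of_nat 2))" by (rule Ln_of_nat) simp
    thus ?thesis by (simp add: powr_def)
  qed
  have key: "exp (- of_real (ln 2) * D s) = c" if s: "s \<in> halfplane 0" for s
  proof -
    have "exp (- \<phi> s * of_real (ln 2)) = c * exp (- s * of_real (ln 2))"
      using eq[OF s] by (simp only: two_powr)
    hence "exp (- \<phi> s * of_real (ln 2)) * exp (s * of_real (ln 2)) = c"
      by (simp add: exp_minus field_simps)
    thus ?thesis by (simp add: D_def exp_add[symmetric] algebra_simps)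
  qed
  have "(D has_field_derivative 0) (at s within halfplane 0)" if s: "s \<in> halfplane 0" for s
  proof -
    have "D holomorphic_on halfplane 0" unfolding D_def[abs_def] by (intro holomorphic_intros hol)
    then obtain D' where D': "(D has_field_derivative D') (at s)"
      using s by (auto simp: holomorphic_on_open open_halfplane)
    have "((\<lambda>z. exp (- of_real (ln 2) * D z)) has_field_derivative
              exp (- of_real (ln 2) * D s) * (- of_real (ln 2) * D')) (at s)"
      by (rule DERIV_chain2[OF DERIV_exp DERIV_cmult[OF D']])
    moreover have "((\<lambda>z. exp (- of_real (ln 2) * D z)) has_field_derivative 0) (at s)"
      by (rule has_field_derivative_transform_within_open[OF DERIV_const[of c] open_halfplane s])
         (metis key mult_minus_left)
    ultimately have "exp (- of_real (ln 2) * D s) * (- of_real (ln 2) * D') = 0"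
      by (rule DERIV_unique)
    thus ?thesis using D' by (simp add: has_field_derivative_at_within)
  qed
  then obtain d where d: "\<And>s. s \<in> halfplane 0 \<Longrightarrow> D s = d"
    using has_field_derivative_zero_constant[OF convex_halfplane] by blast
  have one: "(1::complex) \<in> halfplane 0" by (simp add: halfplane_def)
  have "norm (exp (- of_real (ln 2) * d)) = 1" using key[OF one] d[OF one] c by simp
  hence "Re d = 0" by (simp add: norm_exp_eq_Re)
  hence "\<phi> s = s + \<i> * of_real (Im d)" if "s \<in> halfplane 0" for s
    using d[OF that] by (simp add: D_def complex_eq_iff)
  thus ?thesis by blast
qed

lemma const_on_halfplane_if_const_on_right:
  assumes hol: "f holomorphic_on halfplane 0" and \<sigma>: "\<sigma> \<ge> 0"
    and const: "\<And>w. Re w \<ge> \<sigma> \<Longrightarrow> f w = c"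
  shows "\<forall>z\<in>halfplane 0. f z = c"
proof
  fix z assume "z \<in> halfplane 0"
  show "f z = c"
  proof (rule analytic_continuation_open[where s="halfplane \<sigma>" and s'="halfplane 0" and f=f and g="\<lambda>_. c"])
    show "halfplane \<sigma> \<noteq> {}" by (auto simp: halfplane_def intro!: exI[of _ "of_real (\<sigma> + 1)"])
    show "connected (halfplane 0)" by (rule convex_connected[OF convex_halfplane])
    show "halfplane \<sigma> \<subseteq> halfplane 0" using \<sigma> by (auto simp: halfplane_def)
    show "f w = c" if "w \<in> halfplane \<sigma>" for w using that const by (simp add: halfplane_def)
  qed (use hol \<open>z \<in> halfplane 0\<close> open_halfplane in auto)
qed

text \<open>Along the horizontal line on which \<open>c\<^sub>m m\<^sup>-\<^sup>w\<close> is a negative real, \<open>f\<^sub>c - c\<^sub>1\<close> eventually has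
  negative real part.\<close>

lemma Re_first_coeff_pos:
  assumes summ: "dirichlet_abs_summable c \<sigma>"
    and pos: "\<And>w. Re w \<ge> \<sigma> \<Longrightarrow> Re (dirichlet_val c w) > 0"
    and m: "m \<ge> 2" and gap: "\<And>k. 2 \<le> k \<Longrightarrow> k < m \<Longrightarrow> c k = 0" and cm: "c m \<noteq> 0"
  shows "Re (c 1) > 0"
proof (rule ccontr)
  assume neg: "\<not> Re (c 1) > 0"
  define t0 where "t0 = (Arg (c m) + pi) / ln (real m)"
  define W where "W x = of_real x + \<i> * of_real t0" for x :: real
  define e where "e = (of_nat m :: complex) powr (- (\<i> * of_real t0))"
  have "filterlim (\<lambda>x. Re (W x)) at_top at_top" by (simp add: W_def filterlim_ident)
  hence L: "((\<lambda>x. of_nat m powr (W x) * (dirichlet_val c (W x) - c 1) * e) \<longlongrightarrow> c m * e) at_top"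
    by (intro tendsto_mult_right tendsto_dirichlet_val_next_coeff[OF summ m gap])
  have "of_nat m powr (W x) * e = of_real (real m powr x)" for x
  proof -
    have "of_nat m powr (W x) * e = (of_nat m :: complex) powr (of_real x)"
      unfolding e_def by (simp add: W_def powr_add[symmetric])
    thus ?thesis using powr_of_real[of "real m" x] by simp
  qed
  hence "(\<lambda>x. of_nat m powr (W x) * (dirichlet_val c (W x) - c 1) * e)
      = (\<lambda>x. of_real (real m powr x) * (dirichlet_val c (W x) - c 1))"
    by (intro ext) (metis mult.commute mult.left_commute)
  moreover have "c m * e = - of_real (norm (c m))"
  proof -
    have "Ln (of_nat m :: complex) = of_real (ln (real m))" using m by (simp add: Ln_of_nat)
    hence "e = exp (- (\<i> * of_real t0) * of_real (ln (real m)))"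
      using m by (simp add: e_def powr_def)
    also have "- (\<i> * of_real t0) * of_real (ln (real m)) = - (\<i> * of_real (Arg (c m))) - \<i> * of_real pi"
      using m by (simp add: t0_def field_simps)
    finally have "e = exp (- (\<i> * of_real (Arg (c m)))) * exp (- (\<i> * of_real pi))"
      by (simp add: exp_diff exp_minus field_simps)
    hence "c m * e = of_real (norm (c m)) * exp (\<i> * of_real (Arg (c m))) * exp (- (\<i> * of_real (Arg (c m))))
        * exp (- (\<i> * of_real pi))"
      by (subst Arg_eq[OF cm]) (simp add: mult.assoc)
    thus ?thesis by (simp add: exp_minus)
  qed
  ultimately have "((\<lambda>x. of_real (real m powr x) * (dirichlet_val c (W x) - c 1))
      \<longlongrightarrow> - of_real (norm (c m))) at_top"
    using L by simp
  from tendsto_Re[OF this]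
  have "((\<lambda>x. real m powr x * (Re (dirichlet_val c (W x)) - Re (c 1))) \<longlongrightarrow> - norm (c m)) at_top"
    by simp
  hence "eventually (\<lambda>x. real m powr x * (Re (dirichlet_val c (W x)) - Re (c 1)) < 0) at_top"
    by (rule order_tendstoD(2)) (use cm in simp)
  moreover have "eventually (\<lambda>x. Re (dirichlet_val c (W x)) > 0) at_top"
    using eventually_ge_at_top[of \<sigma>] by eventually_elim (rule pos, simp add: W_def)
  ultimately have "eventually (\<lambda>x::real. False) at_top"
    by eventually_elim (use neg m in \<open>simp add: mult_less_0_iff\<close>)
  thus False by simp
qed

lemma holomorphic_factor_at:
  assumes "g holomorphic_on S" "open S" "w0 \<in> S"
  obtains h where "h holomorphic_on S" "\<And>z. g z = g w0 + (z - w0) * h z"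
proof
  define h where "h z = (if z = w0 then deriv g w0 else (g z - g w0) / (z - w0))" for z
  show "h holomorphic_on S" unfolding h_def[abs_def] by (rule pole_lemma_open[OF assms(1,2)])
  show "g z = g w0 + (z - w0) * h z" for z by (cases "z = w0") (auto simp: h_def)
qed

text \<open>Comparing decay rates, \<open>f\<^sub>u\<close> vanishes to second order at \<open>w\<^sub>0\<close>, so \<open>(m+1)\<^sup>-\<^sup>x = O(m\<^sup>-\<^sup>2\<^sup>x)\<close>,
  which fails as \<open>m\<^sup>2 > m + 1\<close>.\<close>

lemma preimage_dmonomial_geometric_approach_impossible:
  assumes u: "u \<in> Aplus"
    and u_comp: "\<And>s. s \<in> halfplane 0 \<Longrightarrow> dirichlet_val u (\<phi> s) = of_nat (m + 1) powr (- s)"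
    and m: "m \<ge> 2" and w0: "Re w0 > 0"
    and P: "((\<lambda>x::real. \<phi> (of_real x)) \<longlongrightarrow> w0) at_top"
    and Pm: "((\<lambda>x::real. of_nat m powr (of_real x) * (\<phi> (of_real x) - w0)) \<longlongrightarrow> cm) at_top"
    and cm: "cm \<noteq> 0"
  shows False
proof -
  define g where "g = dirichlet_val u"
  define P where "P x = \<phi> (of_real x)" for x :: real
  define k where "k = m + 1"
  have w0H: "w0 \<in> halfplane 0" using w0 by (simp add: halfplane_def)
  have ghol: "g holomorphic_on halfplane 0"
    unfolding g_def by (rule holomorphic_dirichlet_val[OF u])
  obtain h where hhol: "h holomorphic_on halfplane 0" and gh: "\<And>z. g z = g w0 + (z - w0) * h z"
    using holomorphic_factor_at[OF ghol open_halfplane w0H] by blast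
  obtain h2 where h2hol: "h2 holomorphic_on halfplane 0" and hh: "\<And>z. h z = h w0 + (z - w0) * h2 z"
    using holomorphic_factor_at[OF hhol open_halfplane w0H] by blast
  have lim_comp: "((\<lambda>x. f (P x)) \<longlongrightarrow> f w0) at_top" if "f holomorphic_on halfplane 0" for f
  proof (rule isCont_tendsto_compose[of w0 f])
    show "isCont f w0" using that w0H
      by (meson continuous_on_eq_continuous_at holomorphic_on_imp_continuous_on open_halfplane)
  qed (use P in \<open>simp add: P_def\<close>)
  have Pm': "((\<lambda>x::real. of_nat m powr (of_real x) * (P x - w0)) \<longlongrightarrow> cm) at_top"
    using Pm by (simp add: P_def)
  have gP: "eventually (\<lambda>x. g (P x) = of_nat k powr (- of_real x)) at_top"
    using eventually_gt_at_top[of "0::real"]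
    by eventually_elim (simp add: g_def P_def k_def u_comp halfplane_def)
  have "((\<lambda>x::real. (of_nat k :: complex) powr (- of_real x)) \<longlongrightarrow> 0) at_top"
    by (rule of_nat_powr_neg_tendsto_0) (use m in \<open>simp_all add: k_def filterlim_ident\<close>)
  hence "((\<lambda>x. g (P x)) \<longlongrightarrow> 0) at_top"
    by (rule Lim_transform_eventually) (use gP in \<open>auto elim: eventually_mono\<close>)
  hence g0: "g w0 = 0" using lim_comp[OF ghol] tendsto_unique trivial_limit_at_top_linorder by metis
  have "((\<lambda>x. (of_nat m powr (of_real x) * (P x - w0)) * h (P x)) \<longlongrightarrow> cm * h w0) at_top"
    by (rule tendsto_mult[OF Pm' lim_comp[OF hhol]])
  hence "((\<lambda>x. of_nat m powr (of_real x) * (of_nat k :: complex) powr (- of_real x)) \<longlongrightarrow> cm * h w0) at_top"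
    by (rule Lim_transform_eventually)
       (use gP in \<open>auto elim!: eventually_mono simp: gh[of "P _"] g0 mult.assoc\<close>)
  hence "cm * h w0 = 0"
    using of_nat_powr_ratio_tendsto_0[of m k] m tendsto_unique trivial_limit_at_top_linorder
    by (metis k_def le_add1 less_add_one order_trans one_le_numeral)
  hence h0: "h w0 = 0" using cm by simp
  have "((\<lambda>x. (of_nat m powr (of_real x) * (P x - w0)) ^ 2 * h2 (P x)) \<longlongrightarrow> cm ^ 2 * h2 w0) at_top"
    by (intro tendsto_mult tendsto_power Pm' lim_comp[OF h2hol])
  hence lim: "((\<lambda>x. (of_nat m powr (of_real x)) ^ 2 * (of_nat k :: complex) powr (- of_real x))
      \<longlongrightarrow> cm ^ 2 * h2 w0) at_top"
    by (rule Lim_transform_eventually)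
       (use gP in \<open>auto elim!: eventually_mono
          simp: gh[of "P _"] hh[of "P _"] g0 h0 power2_eq_square ac_simps\<close>)
  have "2 * m \<le> m * m" using mult_le_mono1[OF m] by simp
  hence "k < m ^ 2" unfolding k_def power2_eq_square using m by linarith
  hence "filterlim (\<lambda>x::real. norm ((of_nat m powr (of_real x)) ^ 2 * (of_nat k :: complex) powr (- of_real x)))
      at_top at_top"
    using filterlim_norm_of_nat_powr_ratio[of k "m ^ 2"] unfolding of_nat_power_powr by (simp add: k_def)
  thus False
    using not_tendsto_and_filterlim_at_infinity[OF _ lim filterlim_norm_at_top_imp_at_infinity] by simp
qed

lemma dilation_0_impossible:
  assumes auto: "Aplus_automorphism (comp_op \<phi>)"
    and bounded: "\<forall>a\<in>Aplus. \<exists>b\<in>Aplus. \<forall>s\<in>halfplane 0. dirichlet_val b s = dirichlet_val a (\<phi> s)"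
    and hol: "\<phi> holomorphic_on halfplane 0" and maps: "\<phi> ` halfplane 0 \<subseteq> halfplane 0"
    and nonconst: "\<not> (\<exists>w. \<forall>s\<in>halfplane 0. \<phi> s = w)"
    and \<sigma>: "\<sigma> > 0" and summ: "dirichlet_abs_summable c \<sigma>"
    and \<phi>_eq: "\<And>w. Re w \<ge> \<sigma> \<Longrightarrow> \<phi> w = dirichlet_val c w"
  shows False
proof (cases "\<forall>n\<ge>2. c n = 0")
  case True
  have "\<phi> w = c 1" if "Re w \<ge> \<sigma>" for w
  proof -
    have "(\<lambda>n. c n * of_nat n powr (- w)) = (\<lambda>n. if n = 1 then c 1 else 0)"
      using True by (auto simp: fun_eq_iff not_le less_Suc_eq le_Suc_eq numeral_2_eq_2)
    thus ?thesis using \<phi>_eq[OF that] sums_single[of 1 "\<lambda>_. c 1"] by (simp add: dirichlet_val_def sums_iff)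
  qed
  hence "\<forall>z\<in>halfplane 0. \<phi> z = c 1"
    using \<sigma> by (intro const_on_halfplane_if_const_on_right[OF hol, of \<sigma>]) auto
  with nonconst show False by blast
next
  case False
  then obtain n0 where n0: "n0 \<ge> 2" "c n0 \<noteq> 0" by auto
  define m where "m = (LEAST n. 2 \<le> n \<and> c n \<noteq> 0)"
  have "2 \<le> m \<and> c m \<noteq> 0"
    unfolding m_def by (rule LeastI[of _ n0]) (use n0 in auto)
  hence m: "m \<ge> 2" and cm: "c m \<noteq> 0" by auto
  have gap: "c k = 0" if "2 \<le> k" "k < m" for k
    using not_less_Least[of k "\<lambda>n. 2 \<le> n \<and> c n \<noteq> 0"] that by (auto simp: m_def)
  have "Re (dirichlet_val c w) > 0" if "Re w \<ge> \<sigma>" for w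
  proof -
    have "w \<in> halfplane 0" using that \<sigma> by (simp add: halfplane_def)
    hence "\<phi> w \<in> halfplane 0" using maps by auto
    thus ?thesis using \<phi>_eq[OF that] by (simp add: halfplane_def)
  qed
  hence "Re (c 1) > 0" by (rule Re_first_coeff_pos[OF summ _ m gap cm])
  obtain u where u: "u \<in> Aplus"
    and u_comp: "\<And>s. s \<in> halfplane 0 \<Longrightarrow> dirichlet_val u (\<phi> s) = of_nat (m + 1) powr (- s)"
    using comp_op_preimage_dmonomial[OF bounded auto, of "m + 1"] by auto
  have real_top: "filterlim (\<lambda>x::real. Re (of_real x :: complex)) at_top at_top"
    by (simp add: filterlim_ident)
  have ev: "eventually (\<lambda>x::real. dirichlet_val c (of_real x) = \<phi> (of_real x)) at_top"
    using eventually_ge_at_top[of \<sigma>] by eventually_elim (simp add: \<phi>_eq)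
  have "((\<lambda>x::real. \<phi> (of_real x)) \<longlongrightarrow> c 1) at_top"
    by (rule Lim_transform_eventually[OF tendsto_dirichlet_val_first_coeff[OF summ real_top]])
       (use ev in \<open>auto elim: eventually_mono\<close>)
  moreover have "((\<lambda>x::real. of_nat m powr (of_real x) * (\<phi> (of_real x) - c 1)) \<longlongrightarrow> c m) at_top"
    by (rule Lim_transform_eventually[OF tendsto_dirichlet_val_next_coeff[OF summ m gap real_top]])
       (use ev in \<open>auto elim: eventually_mono\<close>)
  ultimately show False
    using preimage_dmonomial_geometric_approach_impossible[OF u u_comp m \<open>Re (c 1) > 0\<close> _ _ cm]
    by blast
qed

theorem theorem15:
  fixes \<phi> :: "complex \<Rightarrow> complex"
  assumes hol: "\<phi> holomorphic_on halfplane 0"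
    and maps: "\<phi> ` halfplane 0 \<subseteq> halfplane 0"
    and nonconst: "\<not> (\<exists>w. \<forall>s\<in>halfplane 0. \<phi> s = w)"
    and form: "\<exists>c0::nat. \<exists>\<psi>\<in>Dclass. \<forall>s\<in>halfplane 0. \<phi> s = of_nat c0 * s + \<psi> s"
    and bounded: "\<forall>a\<in>Aplus. \<exists>b\<in>Aplus.
                    \<forall>s\<in>halfplane 0. dirichlet_val b s = dirichlet_val a (\<phi> s)"
  shows "Aplus_automorphism (comp_op \<phi>) \<longleftrightarrow>
         (\<exists>\<tau>::real. \<forall>s\<in>halfplane 0. \<phi> s = s + \<i> * of_real \<tau>)"
proof
  assume "\<exists>\<tau>::real. \<forall>s\<in>halfplane 0. \<phi> s = s + \<i> * of_real \<tau>"
  thus "Aplus_automorphism (comp_op \<phi>)" using Aplus_automorphism_comp_op_translation by blast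
next
  assume auto: "Aplus_automorphism (comp_op \<phi>)"
  obtain c0 :: nat and \<psi> where \<psi>: "\<psi> \<in> Dclass" and \<phi>_eq: "\<forall>s\<in>halfplane 0. \<phi> s = of_nat c0 * s + \<psi> s"
    using form by blast
  obtain c \<sigma> where \<sigma>: "\<sigma> > 0" and summ: "dirichlet_abs_summable c \<sigma>"
    and \<psi>_eq: "\<And>w. Re w \<ge> \<sigma> \<Longrightarrow> \<psi> w = dirichlet_val c w"
    using Dclass_expansion[OF \<psi>] by blast
  note lower = eventually_Re_comp_ge[OF \<phi>_eq \<sigma> summ \<psi>_eq]
  consider "c0 = 0" | "c0 = 1" | "c0 \<ge> 2" by linarith
  thus "\<exists>\<tau>::real. \<forall>s\<in>halfplane 0. \<phi> s = s + \<i> * of_real \<tau>"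
  proof cases
    case 1
    have "\<phi> w = dirichlet_val c w" if "Re w \<ge> \<sigma>" for w
      using \<phi>_eq \<psi>_eq[OF that] that \<sigma> 1 by (simp add: halfplane_def)
    with dilation_0_impossible[OF auto bounded hol maps nonconst \<sigma> summ] show ?thesis by blast
  next
    case 2
    hence "filterlim (\<lambda>x::real. Re (\<phi> (of_real x))) at_top at_top"
      using filterlim_Re_comp_at_top[OF lower] by simp
    then obtain c where "norm c = 1" "\<And>s. s \<in> halfplane 0 \<Longrightarrow> of_nat 2 powr (- \<phi> s) = c * of_nat 2 powr (- s)"
      using comp_2_powr_eq_unimodular_mult[OF auto bounded maps] by blast
    thus ?thesis by (rule translation_if_2_powr_ratio_unimodular[OF hol])
  next
    case 3
    obtain u where "u \<in> Aplus" "\<And>s. s \<in> halfplane 0 \<Longrightarrow> dirichlet_val u (\<phi> s) = of_nat 2 powr (- s)"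
      using comp_op_preimage_dmonomial[OF bounded auto, of 2] by auto
    with dilation_ge_2_impossible[OF _ _ lower 3] show ?thesis by blast
  qed
qed

end
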